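(* Let $\mathsf{X}$ be a finite connected graph with no tails, with ramified vertices at least one of which is totally ramified, and suppose $\mathsf{X}$ has a segment decomposition with segments $\mathsf{S}^1,\dots,\mathsf{S}^k$ (2-segments $\mathsf{S}^1,\dots,\mathsf{S}^{k'}$ and 1-segments $\mathsf{S}^{k'+1},\dots,\mathsf{S}^k$), $\mathsf{S}^i$ having $t_i$ ramified vertices. Let $\mathsf{X}_n$ be the $n$-th layer of the corresponding $\mathbb{Z}_p$-tower with trivial voltage assignment. Let $n_0$ be large enough that the number of vertices of $\mathsf{X}_n$ lying over ramified vertices of $\mathsf{X}$ is constant for $n\ge n_0$, and denote this number by $l$. Then for $n\ge n_0$, \[\kappa(\mathsf{X}_n)=\kappa(\mathsf{X}_{n_0})\,p^{(n-n_0)(l-1)}\prod_{i=1}^k F_{t_i}(\mathsf{S}^i)^{p^n-p^{n_0}}.\]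
   Context: Graphs are finite and undirected, possibly with multiple edges and loops; $\kappa$ = number of spanning trees. Tails, admissible paths, segment decompositions: a tail is an unramified vertex with exactly one neighbour joined by exactly one edge; an admissible path between ramified $v,v'$ has all intermediate vertices unramified. Admissible paths between distinct ramified vertices sharing an edge are grouped together; a decomposition requires each group to join one pair of ramified vertices, and groups give the 2-segments; the remaining edges lie on admissible closed paths at a single ramified vertex outside the 2-segments, grouped likewise into 1-segments; segments are edge-disjoint, share no unramified vertex and cover $\mathsf{X}$. $F_t(\mathsf{S})$ ($t\in\{1,2\}$) is the number of spanning forests of $\mathsf{S}$ with $t$ trees each containing exactly one ramified vertex. Tower: $\Gamma\cong\mathbb{Z}_p$, $\Gamma_n=\Gamma/\Gamma^{p^n}$, trivial voltage assignment; each vertex $v$ has a closed subgroup $I_v\subseteq\Gamma$, $v$ ramified iff $I_v\ne1$, totally ramified iff $I_v=\Gamma$. $\mathsf{X}_n$ has vertex set $\bigsqcup_v\{v\}\times\Gamma_n/\pi_n(I_v)$ and directed edges $\mathbf{E}(\mathsf{X})\times\Gamma_n$, $(e,g)$ joining $(o(e),g\pi_n(I_{o(e)}))$ to $(t(e),g\pi_n(I_{t(e)}))$; all $\mathsf{X}_n$ are connected. *)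

theory Defs
  imports Main "HOL-Library.Extended_Nat" "HOL-Computational_Algebra.Primes"
begin

text \<open>A graph is given by a vertex set V, an (undirected) edge set E and a map
  ends assigning to every edge its two endpoints (an edge e with
  ends e = (a,a) is a loop; several edges may share the same endpoints).\<close>

definition adj :: "('e \<Rightarrow> 'v \<times> 'v) \<Rightarrow> 'e set \<Rightarrow> ('v \<times> 'v) set" where
  "adj ends T = {(a,b). \<exists>e\<in>T. ends e = (a,b) \<or> ends e = (b,a)}"

definition reach :: "('e \<Rightarrow> 'v \<times> 'v) \<Rightarrow> 'e set \<Rightarrow> ('v \<times> 'v) set" where
  "reach ends T = (adj ends T)\<^sup>*"

definition is_graph :: "'v set \<Rightarrow> 'e set \<Rightarrow> ('e \<Rightarrow> 'v \<times> 'v) \<Rightarrow> bool" where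
  "is_graph V E ends \<longleftrightarrow> finite V \<and> finite E \<and> (\<forall>e\<in>E. ends e \<in> V \<times> V)"

definition connected_graph :: "'v set \<Rightarrow> 'e set \<Rightarrow> ('e \<Rightarrow> 'v \<times> 'v) \<Rightarrow> bool" where
  "connected_graph V E ends \<longleftrightarrow> V \<noteq> {} \<and> (\<forall>a\<in>V. \<forall>b\<in>V. (a,b) \<in> reach ends E)"

text \<open>An edge set is a forest (acyclic) iff no edge lies on a cycle, i.e. the
  endpoints of any of its edges are not joined by the remaining edges
  (in particular a forest contains no loops).\<close>
definition forest :: "('e \<Rightarrow> 'v \<times> 'v) \<Rightarrow> 'e set \<Rightarrow> bool" where
  "forest ends T \<longleftrightarrow> (\<forall>e\<in>T. ends e \<notin> reach ends (T - {e}))"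

definition spanning_tree :: "'v set \<Rightarrow> 'e set \<Rightarrow> ('e \<Rightarrow> 'v \<times> 'v) \<Rightarrow> 'e set \<Rightarrow> bool" where
  "spanning_tree V E ends T \<longleftrightarrow>
     T \<subseteq> E \<and> forest ends T \<and> (\<forall>a\<in>V. \<forall>b\<in>V. (a,b) \<in> reach ends T)"

definition kappa :: "'v set \<Rightarrow> 'e set \<Rightarrow> ('e \<Rightarrow> 'v \<times> 'v) \<Rightarrow> nat" where
  "kappa V E ends = card {T. spanning_tree V E ends T}"

text \<open>The closed subgroups of \<open>\<Gamma> \<cong> \<int>\<^sub>p\<close> are the trivial subgroup and the
  subgroups \<open>\<Gamma>\<^bsup>p^k\<^esup>\<close>, \<open>k \<in> \<nat>\<close>. We encode the inertia group \<open>I\<^sub>v\<close> by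
  \<open>m v :: enat\<close>: \<open>I\<^sub>v = \<Gamma>\<^bsup>p^(m v)\<^esup>\<close> if \<open>m v\<close> is finite and \<open>I\<^sub>v = 1\<close> if
  \<open>m v = \<infinity>\<close>.\<close>

definition ramified :: "('v \<Rightarrow> enat) \<Rightarrow> 'v \<Rightarrow> bool" where
  "ramified m v \<longleftrightarrow> m v \<noteq> \<infinity>"

definition totally_ramified :: "('v \<Rightarrow> enat) \<Rightarrow> 'v \<Rightarrow> bool" where
  "totally_ramified m v \<longleftrightarrow> m v = 0"

definition is_tail :: "'v set \<Rightarrow> 'e set \<Rightarrow> ('e \<Rightarrow> 'v \<times> 'v) \<Rightarrow> ('v \<Rightarrow> enat) \<Rightarrow> 'v \<Rightarrow> bool" where
  "is_tail V E ends m v \<longleftrightarrow> v \<in> V \<and> \<not> ramified m v \<and>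
     (\<exists>e\<in>E. fst (ends e) \<noteq> snd (ends e) \<and>
        {e'\<in>E. fst (ends e') = v \<or> snd (ends e') = v} = {e} \<and>
        (fst (ends e) = v \<or> snd (ends e) = v))"

definition adm_path :: "'e set \<Rightarrow> ('e \<Rightarrow> 'v \<times> 'v) \<Rightarrow> ('v \<Rightarrow> enat) \<Rightarrow> 'e list \<times> 'v list \<Rightarrow> bool" where
  "adm_path E ends m P \<longleftrightarrow> (case P of (es, vs) \<Rightarrow>
     es \<noteq> [] \<and> length vs = length es + 1 \<and> set es \<subseteq> E \<and> distinct es \<and>
     (\<forall>i<length es. ends (es!i) = (vs!i, vs!Suc i) \<or> ends (es!i) = (vs!Suc i, vs!i)) \<and>
     ramified m (hd vs) \<and> ramified m (last vs) \<and>
     distinct (butlast (tl vs)) \<and> (\<forall>w\<in>set (butlast (tl vs)). \<not> ramified m w))"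

definition path_edges :: "'e list \<times> 'v list \<Rightarrow> 'e set" where
  "path_edges P = set (fst P)"

definition path_ends :: "'e list \<times> 'v list \<Rightarrow> 'v set" where
  "path_ends P = {hd (snd P), last (snd P)}"

definition share_rel :: "('e list \<times> 'v list) set \<Rightarrow> (('e list \<times> 'v list) \<times> ('e list \<times> 'v list)) set" where
  "share_rel Ps = {(P,Q). P \<in> Ps \<and> Q \<in> Ps \<and> path_edges P \<inter> path_edges Q \<noteq> {}}"

definition path_groups :: "('e list \<times> 'v list) set \<Rightarrow> ('e list \<times> 'v list) set set" where
  "path_groups Ps = Ps // ((share_rel Ps)\<^sup>+)"

definition group_edges :: "('e list \<times> 'v list) set \<Rightarrow> 'e set" where
  "group_edges G = (\<Union>P\<in>G. path_edges P)"

definition two_paths :: "'e set \<Rightarrow> ('e \<Rightarrow> 'v \<times> 'v) \<Rightarrow> ('v \<Rightarrow> enat) \<Rightarrow> ('e list \<times> 'v list) set" where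
  "two_paths E ends m = {P. adm_path E ends m P \<and> hd (snd P) \<noteq> last (snd P)}"

definition segs2 :: "'e set \<Rightarrow> ('e \<Rightarrow> 'v \<times> 'v) \<Rightarrow> ('v \<Rightarrow> enat) \<Rightarrow> 'e set set" where
  "segs2 E ends m = group_edges ` path_groups (two_paths E ends m)"

definition one_paths :: "'e set \<Rightarrow> ('e \<Rightarrow> 'v \<times> 'v) \<Rightarrow> ('v \<Rightarrow> enat) \<Rightarrow> ('e list \<times> 'v list) set" where
  "one_paths E ends m = {P. adm_path E ends m P \<and> hd (snd P) = last (snd P) \<and>
      path_edges P \<subseteq> E - \<Union>(segs2 E ends m)}"

definition segs1 :: "'e set \<Rightarrow> ('e \<Rightarrow> 'v \<times> 'v) \<Rightarrow> ('v \<Rightarrow> enat) \<Rightarrow> 'e set set" where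
  "segs1 E ends m = group_edges ` path_groups (one_paths E ends m)"

definition segments :: "'e set \<Rightarrow> ('e \<Rightarrow> 'v \<times> 'v) \<Rightarrow> ('v \<Rightarrow> enat) \<Rightarrow> 'e set set" where
  "segments E ends m = segs2 E ends m \<union> segs1 E ends m"

definition edge_verts :: "('e \<Rightarrow> 'v \<times> 'v) \<Rightarrow> 'e set \<Rightarrow> 'v set" where
  "edge_verts ends S = fst ` ends ` S \<union> snd ` ends ` S"

definition has_segment_decomposition ::
  "'v set \<Rightarrow> 'e set \<Rightarrow> ('e \<Rightarrow> 'v \<times> 'v) \<Rightarrow> ('v \<Rightarrow> enat) \<Rightarrow> bool" where
  "has_segment_decomposition V E ends m \<longleftrightarrow>
     (\<forall>G\<in>path_groups (two_paths E ends m). \<exists>v v'. \<forall>P\<in>G. path_ends P = {v, v'}) \<and>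
     (\<forall>e\<in>E - \<Union>(segs2 E ends m). \<exists>P\<in>one_paths E ends m. e \<in> path_edges P) \<and>
     (\<forall>G\<in>path_groups (one_paths E ends m). \<exists>v. \<forall>P\<in>G. path_ends P = {v}) \<and>
     (\<forall>S\<in>segments E ends m. \<forall>S'\<in>segments E ends m. S \<noteq> S' \<longrightarrow>
         S \<inter> S' = {} \<and> edge_verts ends S \<inter> edge_verts ends S' \<subseteq> {v. ramified m v}) \<and>
     \<Union>(segments E ends m) = E \<and>
     (\<Union>S\<in>segments E ends m. edge_verts ends S) = V"

definition seg_t :: "('e \<Rightarrow> 'v \<times> 'v) \<Rightarrow> ('v \<Rightarrow> enat) \<Rightarrow> 'e set \<Rightarrow> nat" where
  "seg_t ends m S = card {v \<in> edge_verts ends S. ramified m v}"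

definition forest_components :: "('e \<Rightarrow> 'v \<times> 'v) \<Rightarrow> 'v set \<Rightarrow> 'e set \<Rightarrow> 'v set set" where
  "forest_components ends W T = (\<lambda>a. reach ends T `` {a}) ` W"

definition F_count :: "('e \<Rightarrow> 'v \<times> 'v) \<Rightarrow> ('v \<Rightarrow> enat) \<Rightarrow> nat \<Rightarrow> 'e set \<Rightarrow> nat" where
  "F_count ends m t S = card {T. T \<subseteq> S \<and> forest ends T \<and>
      card (forest_components ends (edge_verts ends S) T) = t \<and>
      (\<forall>C\<in>forest_components ends (edge_verts ends S) T. card {v\<in>C. ramified m v} = 1)}"

text \<open>\<open>\<Gamma>\<^sub>n = \<int>/p^n\<close> is represented by {0..<p^n}; the image of \<open>I\<^sub>v\<close> in \<open>\<Gamma>\<^sub>n\<close> is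
  \<open>p^(min (m v) n) \<Gamma>\<^sub>n\<close>, so \<open>\<Gamma>\<^sub>n/\<pi>\<^sub>n(I\<^sub>v) \<cong> \<int>/p^(min (m v) n)\<close>, represented by
  residues mod p^(ram_exp m n v).\<close>
definition ram_exp :: "('v \<Rightarrow> enat) \<Rightarrow> nat \<Rightarrow> 'v \<Rightarrow> nat" where
  "ram_exp m n v = (case m v of \<infinity> \<Rightarrow> n | enat k \<Rightarrow> min k n)"

definition layer_verts :: "nat \<Rightarrow> 'v set \<Rightarrow> ('v \<Rightarrow> enat) \<Rightarrow> nat \<Rightarrow> ('v \<times> nat) set" where
  "layer_verts p V m n = {(v, a). v \<in> V \<and> a < p ^ ram_exp m n v}"

definition layer_edges :: "nat \<Rightarrow> 'e set \<Rightarrow> nat \<Rightarrow> ('e \<times> nat) set" where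
  "layer_edges p E n = E \<times> {0..<p ^ n}"

definition layer_ends :: "nat \<Rightarrow> ('e \<Rightarrow> 'v \<times> 'v) \<Rightarrow> ('v \<Rightarrow> enat) \<Rightarrow> nat \<Rightarrow> 'e \<times> nat \<Rightarrow> ('v \<times> nat) \<times> ('v \<times> nat)" where
  "layer_ends p ends m n eg = (case eg of (e, g) \<Rightarrow>
     ((fst (ends e), g mod p ^ ram_exp m n (fst (ends e))),
      (snd (ends e), g mod p ^ ram_exp m n (snd (ends e)))))"

definition kappa_layer :: "nat \<Rightarrow> 'v set \<Rightarrow> 'e set \<Rightarrow> ('e \<Rightarrow> 'v \<times> 'v) \<Rightarrow> ('v \<Rightarrow> enat) \<Rightarrow> nat \<Rightarrow> nat" where
  "kappa_layer p V E ends m n = kappa (layer_verts p V m n) (layer_edges p E n) (layer_ends p ends m n)"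

end

theory Submission
  imports Defs "HOL-Library.FuncSet" "HOL-Library.Disjoint_Sets"
begin

lemma adj_sym: "(x, y) \<in> adj ends T \<Longrightarrow> (y, x) \<in> adj ends T"
  unfolding adj_def by auto

lemma adj_mono: "T \<subseteq> T' \<Longrightarrow> adj ends T \<subseteq> adj ends T'"
  unfolding adj_def by auto

lemma adj_insert: "ends e = (a, b) \<Longrightarrow> adj ends (insert e T) = insert (a, b) (insert (b, a) (adj ends T))"
  unfolding adj_def by auto

lemma sym_adj: "sym (adj ends T)"
  by (rule symI) (rule adj_sym)

lemma equiv_reach: "equiv UNIV (reach ends T)"
  unfolding reach_def by (rule equivI) (auto intro: refl_rtrancl sym_rtrancl sym_adj trans_rtrancl)

lemma reach_refl [simp]: "(x, x) \<in> reach ends T"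
  unfolding reach_def by simp

lemma reach_sym: "(x, y) \<in> reach ends T \<Longrightarrow> (y, x) \<in> reach ends T"
  using sym_rtrancl[OF sym_adj] unfolding reach_def by (rule symD)

lemma reach_trans: "(x, y) \<in> reach ends T \<Longrightarrow> (y, z) \<in> reach ends T \<Longrightarrow> (x, z) \<in> reach ends T"
  unfolding reach_def by (rule rtrancl_trans)

lemma reach_Image_eq_iff: "reach ends T `` {x} = reach ends T `` {y} \<longleftrightarrow> (x, y) \<in> reach ends T"
  by (rule eq_equiv_class_iff[OF equiv_reach UNIV_I UNIV_I])

lemma reach_mono: "T \<subseteq> T' \<Longrightarrow> reach ends T \<subseteq> reach ends T'"
  unfolding reach_def by (simp add: adj_mono rtrancl_mono)

lemma reach_edge: "e \<in> T \<Longrightarrow> ends e \<in> reach ends T"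
  unfolding reach_def adj_def by (cases "ends e") auto

lemma reach_empty: "reach ends {} = Id"
  unfolding reach_def adj_def by simp

lemma reach_insert_iff:
  assumes "ends e = (a, b)"
  shows "(x, y) \<in> reach ends (insert e T) \<longleftrightarrow> (x, y) \<in> reach ends T \<or>
    (x, a) \<in> reach ends T \<and> (b, y) \<in> reach ends T \<or> (x, b) \<in> reach ends T \<and> (a, y) \<in> reach ends T"
proof -
  let ?R = "reach ends T"
  have "(x, y) \<in> reach ends (insert e T) \<longleftrightarrow> (x, y) \<in> ?R \<or> (x, b) \<in> ?R \<and> (a, y) \<in> ?R \<or>
      ((x, a) \<in> ?R \<or> (x, b) \<in> ?R) \<and> ((b, y) \<in> ?R \<or> (a, y) \<in> ?R)"
    unfolding reach_def adj_insert[of ends e a b, OF assms] rtrancl_insert by auto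
  then show ?thesis
    using reach_trans[of x _ ends T y] reach_sym[of a b ends T] reach_sym[of b a ends T] by blast
qed

lemma reach_insert_reach:
  assumes "ends e \<in> reach ends T"
  shows "reach ends (insert e T) = reach ends T"
proof -
  obtain a b where ab: "ends e = (a, b)" by fastforce
  have "(x, y) \<in> reach ends T" if "(x, y) \<in> reach ends (insert e T)" for x y
  proof -
    have "(a, b) \<in> reach ends T" "(b, a) \<in> reach ends T" using assms ab reach_sym by auto
    then show ?thesis
      using that reach_trans[of x _ ends T y] unfolding reach_insert_iff[of ends e a b, OF ab]
      by (meson reach_trans)
  qed
  then show ?thesis using reach_mono[of T "insert e T" ends] by auto
qed

lemma reach_imp_edge_verts: "(x, y) \<in> reach ends T \<Longrightarrow> y = x \<or> y \<in> edge_verts ends T"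
  unfolding reach_def
proof (induction rule: rtrancl_induct)
  case (step y z)
  then obtain e where "e \<in> T" "ends e = (y, z) \<or> ends e = (z, y)"
    unfolding adj_def by auto
  then have "z \<in> edge_verts ends T"
    unfolding edge_verts_def by (metis UnI1 UnI2 fst_conv image_eqI snd_conv)
  then show ?case by simp
qed simp

lemma forest_subset: "forest ends T \<Longrightarrow> T' \<subseteq> T \<Longrightarrow> forest ends T'"
  unfolding forest_def
proof
  fix e assume "\<forall>e\<in>T. ends e \<notin> reach ends (T - {e})" "T' \<subseteq> T" "e \<in> T'"
  moreover have "reach ends (T' - {e}) \<subseteq> reach ends (T - {e})"
    using \<open>T' \<subseteq> T\<close> by (intro reach_mono) auto
  ultimately show "ends e \<notin> reach ends (T' - {e})" by auto
qed

lemma forest_insert_iff: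
  assumes "e \<notin> T"
  shows "forest ends (insert e T) \<longleftrightarrow> forest ends T \<and> ends e \<notin> reach ends T"
proof
  assume F: "forest ends (insert e T)"
  then have "ends e \<notin> reach ends (insert e T - {e})" unfolding forest_def by blast
  then show "forest ends T \<and> ends e \<notin> reach ends T"
    using forest_subset[OF F, of T] assms by (auto simp: insert_Diff_if)
next
  obtain a b where ab: "ends e = (a, b)" by fastforce
  assume T: "forest ends T \<and> ends e \<notin> reach ends T"
  have "ends f \<notin> reach ends (insert e (T - {f}))" if f: "f \<in> T" for f
  proof
    obtain x y where xy: "ends f = (x, y)" by fastforce
    assume "ends f \<in> reach ends (insert e (T - {f}))"
    moreover have "(x, y) \<notin> reach ends (T - {f})" using T f xy unfolding forest_def by auto
    moreover have "reach ends (T - {f}) \<subseteq> reach ends T" by (rule reach_mono) blast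
    ultimately have "(x, a) \<in> reach ends T \<and> (b, y) \<in> reach ends T \<or>
        (x, b) \<in> reach ends T \<and> (a, y) \<in> reach ends T"
      unfolding xy reach_insert_iff[of ends e a b, OF ab] by blast
    moreover have "(x, y) \<in> reach ends T" using reach_edge[OF f, of ends] xy by simp
    ultimately have "(a, b) \<in> reach ends T"
      by (meson reach_sym reach_trans)
    then show False using T ab by simp
  qed
  then have "\<forall>f\<in>T. ends f \<notin> reach ends (insert e T - {f})"
    using assms(1) by (metis insert_Diff_if singletonD)
  then show "forest ends (insert e T)"
    unfolding forest_def using T assms(1) by simp
qed

lemma forest_components_empty: "card (forest_components ends V {}) = card V"
proof -
  have "forest_components ends V {} = (\<lambda>a. {a}) ` V"
    unfolding forest_components_def reach_empty by auto
  then show ?thesis by (simp add: card_image)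
qed

lemma forest_components_insert_reach:
  "ends e \<in> reach ends T \<Longrightarrow> forest_components ends V (insert e T) = forest_components ends V T"
  unfolding forest_components_def by (simp add: reach_insert_reach)

lemma forest_components_insert:
  fixes T :: "'e set"
  assumes ab: "ends e = (a, b)" and V: "a \<in> V" "b \<in> V"
  defines "C x \<equiv> reach ends T `` {x}"
  shows "forest_components ends V (insert e T) =
    insert (C a \<union> C b) (forest_components ends V T - {C a, C b})"
proof -
  have C_eq_iff: "C x = C y \<longleftrightarrow> y \<in> C x" for x y
    unfolding C_def reach_Image_eq_iff by simp
  have C_sym: "y \<in> C x \<longleftrightarrow> x \<in> C y" for x y
    unfolding C_def using reach_sym[of x y ends T] reach_sym[of y x ends T] by blast
  have in_C_ab: "x \<in> C a \<union> C b \<longleftrightarrow> C x = C a \<or> C x = C b" for x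
    using C_eq_iff C_sym by blast
  have new_class: "reach ends (insert e T) `` {x} = (if x \<in> C a \<union> C b then C a \<union> C b else C x)" for x
  proof -
    have mem: "y \<in> reach ends (insert e T) `` {x} \<longleftrightarrow>
        y \<in> C x \<or> a \<in> C x \<and> y \<in> C b \<or> b \<in> C x \<and> y \<in> C a" for y
      unfolding Image_singleton_iff reach_insert_iff[of ends e a b, OF ab] C_def by simp
    show ?thesis
    proof (cases "x \<in> C a \<union> C b")
      case True
      have self: "z \<in> C z" for z unfolding C_def by simp
      from True have "C x = C a \<and> a \<in> C x \<or> C x = C b \<and> b \<in> C x"
        unfolding in_C_ab using self by auto
      then have "y \<in> reach ends (insert e T) `` {x} \<longleftrightarrow> y \<in> C a \<union> C b" for y
        unfolding mem by auto
      then show ?thesis unfolding if_P[OF True] by blast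
    next
      case False
      then have "a \<notin> C x" "b \<notin> C x" using in_C_ab C_eq_iff by auto
      then show ?thesis unfolding if_not_P[OF False] using mem by blast
    qed
  qed
  have "forest_components ends V (insert e T) =
      (\<lambda>x. if x \<in> C a \<union> C b then C a \<union> C b else C x) ` V"
    unfolding forest_components_def new_class ..
  also have "\<dots> = insert (C a \<union> C b) (C ` V - {C a, C b})"
    unfolding in_C_ab using V by (auto intro: rev_image_eqI)
  finally show ?thesis unfolding forest_components_def C_def .
qed

lemma card_forest_components_insert:
  assumes ab: "ends e = (a, b)" and V: "finite V" "a \<in> V" "b \<in> V"
    and "(a, b) \<notin> reach ends T"
  shows "card (forest_components ends V (insert e T)) + 1 = card (forest_components ends V T)"
proof -
  let ?C = "\<lambda>x. reach ends T `` {x}"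
  let ?F = "forest_components ends V T"
  have "?C a \<noteq> ?C b" using assms(5) reach_Image_eq_iff[of ends T a b] by simp
  then have two: "card {?C a, ?C b} = 2" by simp
  have sub: "{?C a, ?C b} \<subseteq> ?F" unfolding forest_components_def using V by auto
  have fin: "finite ?F" unfolding forest_components_def using V by simp
  have "?C a \<union> ?C b \<notin> ?F"
  proof
    assume "?C a \<union> ?C b \<in> ?F"
    then obtain x where "?C a \<union> ?C b = ?C x" unfolding forest_components_def by auto
    then have "a \<in> ?C x" "b \<in> ?C x" using reach_refl[of a ends T] reach_refl[of b ends T] by blast+
    then have "(x, a) \<in> reach ends T" "(x, b) \<in> reach ends T" by simp_all
    then show False using assms(5) reach_trans[OF reach_sym[of x a ends T]] by blast
  qed
  moreover have "card (?F - {?C a, ?C b}) = card ?F - 2"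
    using card_Diff_subset[OF _ sub] two by simp
  moreover have "card ?F \<ge> 2" using card_mono[OF fin sub] two by simp
  ultimately show ?thesis
    unfolding forest_components_insert[where ends=ends and e=e, OF ab V(2,3)] using fin by simp
qed

lemma card_forest_components:
  assumes "finite V" "finite T" "\<forall>e\<in>T. ends e \<in> V \<times> V"
  shows "card V \<le> card (forest_components ends V T) + card T"
    and "forest ends T \<longleftrightarrow> card (forest_components ends V T) + card T = card V"
proof -
  have "card V \<le> card (forest_components ends V T) + card T \<and>
    (forest ends T \<longleftrightarrow> card (forest_components ends V T) + card T = card V)"
    using assms(2,3)
  proof (induction T rule: finite_induct)
    case empty
    then show ?case using forest_components_empty[of ends V] unfolding forest_def by simp
  next
    case (insert e T)
    obtain a b where ab: "ends e = (a, b)" by fastforce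
    show ?case
    proof (cases "(a, b) \<in> reach ends T")
      case True
      then show ?thesis
        using insert forest_components_insert_reach[of ends e T V] ab
        by (auto simp: forest_insert_iff[OF insert(2)])
    next
      case False
      have "a \<in> V" "b \<in> V" using insert.prems ab by auto
      then show ?thesis
        using insert card_forest_components_insert[OF ab assms(1) _ _ False] False ab
        by (auto simp: forest_insert_iff[OF insert(2)])
    qed
  qed
  then show "card V \<le> card (forest_components ends V T) + card T"
    and "forest ends T \<longleftrightarrow> card (forest_components ends V T) + card T = card V"
    by auto
qed

lemma connected_iff_card_forest_components:
  assumes "V \<noteq> {}"
  shows "(\<forall>x\<in>V. \<forall>y\<in>V. (x, y) \<in> reach ends T) \<longleftrightarrow> card (forest_components ends V T) = 1"
proof
  assume conn: "\<forall>x\<in>V. \<forall>y\<in>V. (x, y) \<in> reach ends T"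
  obtain x0 where x0: "x0 \<in> V" using assms by auto
  have "forest_components ends V T = {reach ends T `` {x0}}"
    unfolding forest_components_def using conn x0 reach_Image_eq_iff[of ends T _ x0] by auto
  then show "card (forest_components ends V T) = 1" by simp
next
  assume "card (forest_components ends V T) = 1"
  then obtain X where "forest_components ends V T = {X}" using card_1_singletonE by blast
  then show "\<forall>x\<in>V. \<forall>y\<in>V. (x, y) \<in> reach ends T"
    unfolding forest_components_def by (metis image_eqI reach_Image_eq_iff singletonD)
qed

lemma spanning_tree_iff_card:
  assumes "finite V" "V \<noteq> {}" "finite E" "\<forall>e\<in>E. ends e \<in> V \<times> V"
  shows "spanning_tree V E ends T \<longleftrightarrow>
    T \<subseteq> E \<and> (\<forall>x\<in>V. \<forall>y\<in>V. (x, y) \<in> reach ends T) \<and> card T + 1 = card V"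
proof (cases "T \<subseteq> E")
  case True
  then have "finite T" "\<forall>e\<in>T. ends e \<in> V \<times> V"
    using assms(3,4) finite_subset by auto
  then have "forest ends T \<longleftrightarrow> card (forest_components ends V T) + card T = card V"
    by (rule card_forest_components(2)[OF assms(1)])
  then show ?thesis
    unfolding spanning_tree_def connected_iff_card_forest_components[OF assms(2)]
    using True by auto
qed (auto simp: spanning_tree_def)

lemma card_forest_components_two:
  assumes "a \<in> W" "b \<in> W" "\<forall>x\<in>W. (x, a) \<in> reach ends T \<or> (x, b) \<in> reach ends T"
  shows "card (forest_components ends W T) = (if (a, b) \<in> reach ends T then 1 else 2)"
proof -
  have "reach ends T `` {x} = reach ends T `` {a} \<or> reach ends T `` {x} = reach ends T `` {b}"
    if "x \<in> W" for x
    using assms(3) that by (simp add: reach_Image_eq_iff)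
  then have "forest_components ends W T = {reach ends T `` {a}, reach ends T `` {b}}"
    unfolding forest_components_def using assms(1,2) by blast
  then show ?thesis
    using reach_Image_eq_iff[of ends T a b] by (cases "(a, b) \<in> reach ends T") simp_all
qed

lemma card_subsets_by_parts:
  assumes "finite J" and disj: "disjoint_family_on P J" and A: "\<And>j. j \<in> J \<Longrightarrow> A j \<subseteq> Pow (P j)"
  shows "card {T. T \<subseteq> (\<Union>j\<in>J. P j) \<and> (\<forall>j\<in>J. T \<inter> P j \<in> A j)} = (\<Prod>j\<in>J. card (A j))"
proof -
  let ?S = "{T. T \<subseteq> (\<Union>j\<in>J. P j) \<and> (\<forall>j\<in>J. T \<inter> P j \<in> A j)}"
  let ?split = "\<lambda>T. restrict (\<lambda>j. T \<inter> P j) J"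
  have "bij_betw ?split ?S (PiE J A)"
  proof (rule bij_betwI')
    fix T T' assume "T \<in> ?S" "T' \<in> ?S"
    then have T: "T = (\<Union>j\<in>J. T \<inter> P j)" and T': "T' = (\<Union>j\<in>J. T' \<inter> P j)" by blast+
    show "?split T = ?split T' \<longleftrightarrow> T = T'"
    proof
      assume "?split T = ?split T'"
      from fun_cong[OF this] have "T \<inter> P j = T' \<inter> P j" if "j \<in> J" for j using that by (metis restrict_apply)
      then have "(\<Union>j\<in>J. T \<inter> P j) = (\<Union>j\<in>J. T' \<inter> P j)" by (rule SUP_cong[OF refl])
      then show "T = T'" using T T' by simp
    qed simp
  next
    fix T assume "T \<in> ?S"
    then show "?split T \<in> PiE J A" by simp
  next
    fix f assume f: "f \<in> PiE J A"
    then have f_sub: "f k \<subseteq> P k" if "k \<in> J" for k using A that by blast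
    have parts: "(\<Union>k\<in>J. f k) \<inter> P j = f j" if j: "j \<in> J" for j
    proof
      show "f j \<subseteq> (\<Union>k\<in>J. f k) \<inter> P j" using j f_sub by blast
      show "(\<Union>k\<in>J. f k) \<inter> P j \<subseteq> f j"
      proof
        fix x assume "x \<in> (\<Union>k\<in>J. f k) \<inter> P j"
        then obtain k where k: "k \<in> J" "x \<in> f k" "x \<in> P j" by blast
        then have "x \<in> P k \<inter> P j" using f_sub by blast
        then have "k = j" using disj k(1) j unfolding disjoint_family_on_def by auto
        then show "x \<in> f j" using k(2) by simp
      qed
    qed
    have "f = ?split (\<Union>k\<in>J. f k)"
    proof
      fix j show "f j = ?split (\<Union>k\<in>J. f k) j"
        using f parts by (cases "j \<in> J") (auto simp: PiE_def extensional_def)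
    qed
    moreover have "(\<Union>k\<in>J. f k) \<in> ?S" using f f_sub parts by auto
    ultimately show "\<exists>T\<in>?S. f = ?split T" by blast
  qed
  from bij_betw_same_card[OF this] show ?thesis by (simp add: card_PiE[OF assms(1)])
qed

locale glued_graph =
  fixes V :: "'v set" and E :: "'e set" and ends :: "'e \<Rightarrow> 'v \<times> 'v"
    and R :: "'v set" and J :: "'j set" and P :: "'j \<Rightarrow> 'e set" and I :: "'j \<Rightarrow> 'v set"
    and a :: "'j \<Rightarrow> 'v" and b :: "'j \<Rightarrow> 'v"
  assumes finite_V: "finite V" and finite_E: "finite E" and finite_J: "finite J"
    and R_nonempty: "R \<noteq> {}"
    and V_eq: "V = R \<union> (\<Union>j\<in>J. I j)"
    and R_inner_disjoint: "\<And>j. j \<in> J \<Longrightarrow> R \<inter> I j = {}"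
    and inner_disjoint: "disjoint_family_on I J"
    and E_eq: "E = (\<Union>j\<in>J. P j)"
    and edges_disjoint: "disjoint_family_on P J"
    and junctions_in_R: "\<And>j. j \<in> J \<Longrightarrow> a j \<in> R \<and> b j \<in> R"
    and piece_ends: "\<And>j e. j \<in> J \<Longrightarrow> e \<in> P j \<Longrightarrow>
      ends e \<in> insert (a j) (insert (b j) (I j)) \<times> insert (a j) (insert (b j) (I j))"
begin

definition piece_verts :: "'j \<Rightarrow> 'v set" where
  "piece_verts j = insert (a j) (insert (b j) (I j))"

definition skeleton_edges :: "'j set" where
  "skeleton_edges = {j \<in> J. a j \<noteq> b j}"

definition skeleton_ends :: "'j \<Rightarrow> 'v \<times> 'v" where
  "skeleton_ends j = (a j, b j)"

definition piece_forest :: "'j \<Rightarrow> 'e set \<Rightarrow> bool" where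
  "piece_forest j f \<longleftrightarrow> f \<subseteq> P j \<and> forest ends f \<and>
     (\<forall>x\<in>piece_verts j. (x, a j) \<in> reach ends f \<or> (x, b j) \<in> reach ends f)"

definition joins :: "'j \<Rightarrow> 'e set \<Rightarrow> bool" where
  "joins j f \<longleftrightarrow> a j \<noteq> b j \<and> (a j, b j) \<in> reach ends f"

definition skeleton_of :: "'e set \<Rightarrow> 'j set" where
  "skeleton_of T = {j \<in> J. joins j (T \<inter> P j)}"

definition piece_forests :: "'j \<Rightarrow> bool \<Rightarrow> 'e set set" where
  "piece_forests j \<beta> = {f. piece_forest j f \<and> joins j f = \<beta>}"

lemma ends_in_piece_verts: "j \<in> J \<Longrightarrow> e \<in> P j \<Longrightarrow> ends e \<in> piece_verts j \<times> piece_verts j"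
  unfolding piece_verts_def by (rule piece_ends)

lemma piece_verts_subset:
  assumes "j \<in> J" shows "piece_verts j \<subseteq> V"
proof -
  have "I j \<subseteq> V" "R \<subseteq> V" using assms unfolding V_eq by blast+
  then show ?thesis unfolding piece_verts_def using junctions_in_R[OF assms] by blast
qed

lemma finite_piece_verts: "j \<in> J \<Longrightarrow> finite (piece_verts j)"
  using piece_verts_subset finite_V finite_subset by blast

lemma finite_P: "j \<in> J \<Longrightarrow> finite (P j)"
  using E_eq finite_E by (simp add: rev_finite_subset[OF finite_E, of "P j"] UN_upper)

lemma ends_in_V:
  assumes "e \<in> E" shows "ends e \<in> V \<times> V"
proof -
  obtain j where j: "j \<in> J" "e \<in> P j" using assms unfolding E_eq by blast
  then have "ends e \<in> piece_verts j \<times> piece_verts j" by (rule ends_in_piece_verts)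
  then show ?thesis using piece_verts_subset[OF j(1)] by (cases "ends e") auto
qed

lemma piece_vert_cases:
  assumes "j \<in> J" "x \<in> piece_verts j"
  shows "x \<in> R \<and> (x = a j \<or> x = b j) \<or> x \<in> I j \<and> x \<notin> R"
  using junctions_in_R[OF assms(1)] R_inner_disjoint[OF assms(1)] assms(2)
  unfolding piece_verts_def by blast

lemma card_V: "card V = card R + (\<Sum>j\<in>J. card (I j))"
proof -
  have "R \<subseteq> V" "\<And>j. j \<in> J \<Longrightarrow> I j \<subseteq> V" unfolding V_eq by auto
  then have "finite R" "\<And>j. j \<in> J \<Longrightarrow> finite (I j)" using finite_V by (meson finite_subset)+
  moreover have "R \<inter> (\<Union>j\<in>J. I j) = {}" using R_inner_disjoint by auto
  ultimately have "card V = card R + card (\<Union>j\<in>J. I j)"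
    unfolding V_eq using finite_J by (simp add: card_Un_disjoint)
  also have "card (\<Union>j\<in>J. I j) = (\<Sum>j\<in>J. card (I j))"
    using \<open>\<And>j. j \<in> J \<Longrightarrow> finite (I j)\<close> inner_disjoint finite_J
    by (simp add: card_UN_disjoint disjoint_family_on_def)
  finally show ?thesis .
qed

lemma card_edges:
  assumes "T \<subseteq> E" shows "card T = (\<Sum>j\<in>J. card (T \<inter> P j))"
proof -
  have "T = (\<Union>j\<in>J. T \<inter> P j)" using assms unfolding E_eq by blast
  moreover have "card (\<Union>j\<in>J. T \<inter> P j) = (\<Sum>j\<in>J. card (T \<inter> P j))"
    using finite_J finite_P edges_disjoint unfolding disjoint_family_on_def
    by (intro card_UN_disjoint) blast+
  ultimately show ?thesis by simp
qed

lemma card_piece_verts: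
  assumes j: "j \<in> J" shows "card (piece_verts j) = card (I j) + (if a j = b j then 1 else 2)"
proof -
  have "finite (I j)" using finite_piece_verts[OF j] unfolding piece_verts_def by simp
  moreover have "a j \<notin> I j" "b j \<notin> I j" using junctions_in_R[OF j] R_inner_disjoint[OF j] by blast+
  ultimately show ?thesis unfolding piece_verts_def by simp
qed

lemma piece_forest_card:
  assumes j: "j \<in> J" and f: "f \<subseteq> P j"
    and reaches: "\<forall>x\<in>piece_verts j. (x, a j) \<in> reach ends f \<or> (x, b j) \<in> reach ends f"
  shows "card (I j) + of_bool (joins j f) \<le> card f"
    and "forest ends f \<longleftrightarrow> card f = card (I j) + of_bool (joins j f)"
proof -
  have fin: "finite f" using finite_P[OF j] f by (rule rev_finite_subset)
  have "\<forall>e\<in>f. ends e \<in> piece_verts j \<times> piece_verts j" using ends_in_piece_verts[OF j] f by blast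
  note card_fc = card_forest_components[OF finite_piece_verts[OF j] fin this]
  have "a j \<in> piece_verts j" "b j \<in> piece_verts j" unfolding piece_verts_def by auto
  note two = card_forest_components_two[OF this reaches]
  show "card (I j) + of_bool (joins j f) \<le> card f"
    and "forest ends f \<longleftrightarrow> card f = card (I j) + of_bool (joins j f)"
    using card_fc two card_piece_verts[OF j] unfolding joins_def
    by (cases "a j = b j"; cases "(a j, b j) \<in> reach ends f"; simp)+
qed

lemma card_skeleton_of: "(\<Sum>j\<in>J. of_bool (joins j (T \<inter> P j))) = card (skeleton_of T)"
  unfolding skeleton_of_def using finite_J by (simp add: Collect_conj_eq Int_commute)

lemma skeleton_of_subset: "skeleton_of T \<subseteq> skeleton_edges"
  unfolding skeleton_of_def skeleton_edges_def joins_def by blast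

lemma skeleton_ends_in_R: "j \<in> skeleton_edges \<Longrightarrow> skeleton_ends j \<in> R \<times> R"
  unfolding skeleton_edges_def skeleton_ends_def using junctions_in_R by blast

lemma finite_skeleton_edges: "finite skeleton_edges"
  unfolding skeleton_edges_def using finite_J by simp

lemma skeleton_reach_imp_reach:
  assumes "(x, y) \<in> reach skeleton_ends (skeleton_of T)"
  shows "(x, y) \<in> reach ends T"
proof -
  have "(a k, b k) \<in> reach ends T" if "k \<in> skeleton_of T" for k
    using that reach_mono[of "T \<inter> P k" T ends] unfolding skeleton_of_def joins_def by blast
  then have "adj skeleton_ends (skeleton_of T) \<subseteq> reach ends T"
    unfolding adj_def skeleton_ends_def using reach_sym by fastforce
  then have "reach skeleton_ends (skeleton_of T) \<subseteq> (reach ends T)\<^sup>*"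
    unfolding reach_def[of skeleton_ends] by (rule rtrancl_mono)
  then show ?thesis using assms unfolding reach_def[of ends T] by auto
qed

lemma junctions_reach_skeleton:
  assumes k: "k \<in> J" and cd: "c \<in> {a k, b k}" "d \<in> {a k, b k}"
    and r: "(c, d) \<in> reach ends (T \<inter> P k)"
  shows "(c, d) \<in> reach skeleton_ends (skeleton_of T)"
proof (cases "c = d")
  case False
  then have "a k \<noteq> b k" "(a k, b k) \<in> reach ends (T \<inter> P k)"
    using cd r reach_sym[of c d ends] by auto
  then have "k \<in> skeleton_of T" unfolding skeleton_of_def joins_def using k by simp
  then have "(a k, b k) \<in> reach skeleton_ends (skeleton_of T)"
    using reach_edge[of k "skeleton_of T" skeleton_ends] unfolding skeleton_ends_def by simp
  then show ?thesis using cd False reach_sym[of "a k" "b k" skeleton_ends] by auto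
qed simp

lemma edge_in_piece:
  assumes "T \<subseteq> E" "(y, z) \<in> adj ends T"
  obtains k where "k \<in> J" "y \<in> piece_verts k" "z \<in> piece_verts k" "(y, z) \<in> reach ends (T \<inter> P k)"
proof -
  obtain e where e: "e \<in> T" "ends e = (y, z) \<or> ends e = (z, y)" using assms(2) unfolding adj_def by auto
  then obtain k where k: "k \<in> J" "e \<in> P k" using assms(1) unfolding E_eq by blast
  have "e \<in> T \<inter> P k" using e k by simp
  then have "(y, z) \<in> reach ends (T \<inter> P k)"
    using e(2) reach_edge[of e "T \<inter> P k" ends] reach_sym[of z y ends] by auto
  moreover have "y \<in> piece_verts k" "z \<in> piece_verts k"
    using ends_in_piece_verts[OF k] e(2) by auto
  ultimately show ?thesis using that k(1) by blast
qed

lemma reach_from_junction: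
  assumes T: "T \<subseteq> E" and r: "r \<in> R" and rz: "(r, z) \<in> reach ends T"
  shows "(z \<in> R \<longrightarrow> (r, z) \<in> reach skeleton_ends (skeleton_of T)) \<and>
    (\<forall>j\<in>J. z \<in> I j \<longrightarrow>
      (\<exists>c\<in>{a j, b j}. (r, c) \<in> reach skeleton_ends (skeleton_of T) \<and> (c, z) \<in> reach ends (T \<inter> P j)))"
  using rz unfolding reach_def[of ends T]
proof (induction rule: rtrancl_induct)
  case base
  then show ?case using r R_inner_disjoint by auto
next
  case (step y z)
  obtain k where k: "k \<in> J" "y \<in> piece_verts k" "z \<in> piece_verts k"
    and yz: "(y, z) \<in> reach ends (T \<inter> P k)"
    using edge_in_piece[OF T step(2)] by blast
  obtain c where c: "c \<in> {a k, b k}" "(r, c) \<in> reach skeleton_ends (skeleton_of T)"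
    "(c, z) \<in> reach ends (T \<inter> P k)"
  proof (cases "y \<in> R")
    case True
    then show ?thesis using that[of y] step(3) yz piece_vert_cases[OF k(1,2)] by auto
  next
    case False
    then obtain c where "c \<in> {a k, b k}" "(r, c) \<in> reach skeleton_ends (skeleton_of T)"
      "(c, y) \<in> reach ends (T \<inter> P k)"
      using step(3) k(1) piece_vert_cases[OF k(1,2)] by blast
    then show ?thesis using that[of c] reach_trans[OF _ yz] by blast
  qed
  have "(r, z) \<in> reach skeleton_ends (skeleton_of T)" if "z \<in> R"
  proof -
    have "z \<in> {a k, b k}" using that piece_vert_cases[OF k(1,3)] by auto
    then show ?thesis using junctions_reach_skeleton[OF k(1) c(1) _ c(3)] reach_trans[OF c(2)] by blast
  qed
  moreover have "j = k" if "j \<in> J" "z \<in> I j" for j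
    using that piece_vert_cases[OF k(1,3)] R_inner_disjoint inner_disjoint k(1)
    unfolding disjoint_family_on_def by blast
  ultimately show ?case using c by blast
qed

lemma R_subset: "R \<subseteq> V"
  unfolding V_eq by blast

lemma finite_R: "finite R"
  using finite_V R_subset by (rule rev_finite_subset)

lemma V_nonempty: "V \<noteq> {}"
  using R_nonempty R_subset by blast

lemma spanning_tree_iff_card_V:
  "spanning_tree V E ends T \<longleftrightarrow>
    T \<subseteq> E \<and> (\<forall>x\<in>V. \<forall>y\<in>V. (x, y) \<in> reach ends T) \<and> card T + 1 = card V"
  using spanning_tree_iff_card[OF finite_V V_nonempty finite_E] ends_in_V by blast

lemma spanning_tree_iff_card_skeleton:
  "spanning_tree R skeleton_edges skeleton_ends \<tau> \<longleftrightarrow>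
    \<tau> \<subseteq> skeleton_edges \<and> (\<forall>x\<in>R. \<forall>y\<in>R. (x, y) \<in> reach skeleton_ends \<tau>) \<and> card \<tau> + 1 = card R"
  using spanning_tree_iff_card[OF finite_R R_nonempty finite_skeleton_edges] skeleton_ends_in_R by blast

lemma connected_imp_piece_reaches_junctions:
  assumes T: "T \<subseteq> E" and conn: "\<forall>x\<in>V. \<forall>y\<in>V. (x, y) \<in> reach ends T" and j: "j \<in> J"
    and x: "x \<in> piece_verts j"
  shows "(x, a j) \<in> reach ends (T \<inter> P j) \<or> (x, b j) \<in> reach ends (T \<inter> P j)"
proof (cases "x \<in> R")
  case True
  then show ?thesis using piece_vert_cases[OF j x] by auto
next
  case False
  then have xI: "x \<in> I j" using piece_vert_cases[OF j x] by auto
  obtain r where r: "r \<in> R" using R_nonempty by blast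
  then have "(r, x) \<in> reach ends T"
    using conn R_subset piece_verts_subset[OF j] x by blast
  then obtain c where "c \<in> {a j, b j}" "(c, x) \<in> reach ends (T \<inter> P j)"
    using reach_from_junction[OF T r] j xI by blast
  then show ?thesis using reach_sym[of c x ends "T \<inter> P j"] by blast
qed

lemma connected_imp_skeleton_connected:
  assumes T: "T \<subseteq> E" and conn: "\<forall>x\<in>V. \<forall>y\<in>V. (x, y) \<in> reach ends T"
  shows "\<forall>x\<in>R. \<forall>y\<in>R. (x, y) \<in> reach skeleton_ends (skeleton_of T)"
  using reach_from_junction[OF T] conn R_subset by blast

lemma spanning_tree_imp_pieces:
  assumes "spanning_tree V E ends T"
  shows "\<forall>j\<in>J. piece_forest j (T \<inter> P j)"
    and "spanning_tree R skeleton_edges skeleton_ends (skeleton_of T)"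
proof -
  have T: "T \<subseteq> E" and conn: "\<forall>x\<in>V. \<forall>y\<in>V. (x, y) \<in> reach ends T"
    and card_T: "card T + 1 = card V"
    using assms unfolding spanning_tree_iff_card_V by auto
  have reaches: "\<forall>x\<in>piece_verts j. (x, a j) \<in> reach ends (T \<inter> P j) \<or> (x, b j) \<in> reach ends (T \<inter> P j)"
    if "j \<in> J" for j
    using connected_imp_piece_reaches_junctions[OF T conn that] by blast
  note skeleton_conn = connected_imp_skeleton_connected[OF T conn]
  have lower: "card (I j) + of_bool (joins j (T \<inter> P j)) \<le> card (T \<inter> P j)" if "j \<in> J" for j
    using piece_forest_card(1)[OF that _ reaches[OF that]] by blast
  have "finite (skeleton_of T)"
    using finite_skeleton_edges skeleton_of_subset by (rule rev_finite_subset)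
  moreover have "\<forall>j\<in>skeleton_of T. skeleton_ends j \<in> R \<times> R"
    using skeleton_of_subset skeleton_ends_in_R by (meson subsetD)
  ultimately have "card R \<le> card (forest_components skeleton_ends R (skeleton_of T)) + card (skeleton_of T)"
    by (rule card_forest_components(1)[OF finite_R])
  moreover have "card (forest_components skeleton_ends R (skeleton_of T)) = 1"
    using skeleton_conn connected_iff_card_forest_components[OF R_nonempty, of skeleton_ends] by simp
  ultimately have card_R: "card R \<le> card (skeleton_of T) + 1" by simp
  have "(\<Sum>j\<in>J. card (I j) + of_bool (joins j (T \<inter> P j))) = (\<Sum>j\<in>J. card (I j)) + card (skeleton_of T)"
    by (simp add: sum.distrib card_skeleton_of)
  moreover have "(\<Sum>j\<in>J. card (I j) + of_bool (joins j (T \<inter> P j))) \<le> (\<Sum>j\<in>J. card (T \<inter> P j))"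
    using lower by (rule sum_mono)
  ultimately have tight: "card (skeleton_of T) + 1 = card R"
    "(\<Sum>j\<in>J. card (I j) + of_bool (joins j (T \<inter> P j))) = (\<Sum>j\<in>J. card (T \<inter> P j))"
    using card_R card_edges[OF T] card_V card_T by linarith+
  show "\<forall>j\<in>J. piece_forest j (T \<inter> P j)"
  proof
    fix j assume j: "j \<in> J"
    have "card (T \<inter> P j) = card (I j) + of_bool (joins j (T \<inter> P j))"
      using sum_mono_inv[OF tight(2) lower j finite_J] by simp
    then have "forest ends (T \<inter> P j)"
      using piece_forest_card(2)[OF j _ reaches[OF j]] by blast
    then show "piece_forest j (T \<inter> P j)" unfolding piece_forest_def using reaches[OF j] by blast
  qed
  show "spanning_tree R skeleton_edges skeleton_ends (skeleton_of T)"
    unfolding spanning_tree_iff_card_skeleton using skeleton_of_subset skeleton_conn tight(1) by simp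
qed

lemma pieces_imp_spanning_tree:
  assumes T: "T \<subseteq> E" and pieces: "\<forall>j\<in>J. piece_forest j (T \<inter> P j)"
    and skeleton: "spanning_tree R skeleton_edges skeleton_ends (skeleton_of T)"
  shows "spanning_tree V E ends T"
proof -
  have skeleton_conn: "\<forall>x\<in>R. \<forall>y\<in>R. (x, y) \<in> reach skeleton_ends (skeleton_of T)"
    and card_skeleton: "card (skeleton_of T) + 1 = card R"
    using skeleton unfolding spanning_tree_iff_card_skeleton by auto
  obtain r where r: "r \<in> R" using R_nonempty by blast
  have to_r: "(x, r) \<in> reach ends T" if x: "x \<in> V" for x
  proof (cases "x \<in> R")
    case True
    then show ?thesis using skeleton_conn r skeleton_reach_imp_reach by blast
  next
    case False
    then obtain j where j: "j \<in> J" "x \<in> I j" using x unfolding V_eq by blast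
    then obtain c where c: "c \<in> {a j, b j}" "(x, c) \<in> reach ends (T \<inter> P j)"
      using pieces unfolding piece_forest_def piece_verts_def by blast
    then have "(x, c) \<in> reach ends T" using reach_mono[of "T \<inter> P j" T ends] by blast
    moreover have "(c, r) \<in> reach ends T"
      using c(1) junctions_in_R[OF j(1)] skeleton_conn r skeleton_reach_imp_reach by blast
    ultimately show ?thesis by (rule reach_trans)
  qed
  have "card (T \<inter> P j) = card (I j) + of_bool (joins j (T \<inter> P j))" if "j \<in> J" for j
    using pieces piece_forest_card(2)[OF that] that unfolding piece_forest_def by blast
  then have "card T = (\<Sum>j\<in>J. card (I j)) + card (skeleton_of T)"
    unfolding card_edges[OF T] by (simp add: sum.distrib card_skeleton_of)
  then have "card T + 1 = card V" using card_V card_skeleton by simp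
  moreover have "\<forall>x\<in>V. \<forall>y\<in>V. (x, y) \<in> reach ends T"
    using to_r reach_sym[of _ r ends T] reach_trans[of _ r ends T] by blast
  ultimately show ?thesis unfolding spanning_tree_iff_card_V using T by blast
qed

lemma card_spanning_trees:
  "card {T. spanning_tree V E ends T} =
    (\<Sum>\<tau> | spanning_tree R skeleton_edges skeleton_ends \<tau>. \<Prod>j\<in>J. card (piece_forests j (j \<in> \<tau>)))"
proof -
  let ?ST = "{\<tau>. spanning_tree R skeleton_edges skeleton_ends \<tau>}"
  let ?U = "\<lambda>\<tau>. {T. T \<subseteq> (\<Union>j\<in>J. P j) \<and> (\<forall>j\<in>J. T \<inter> P j \<in> piece_forests j (j \<in> \<tau>))}"
  have ST_subset: "\<tau> \<subseteq> J" if "\<tau> \<in> ?ST" for \<tau>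
    using that unfolding spanning_tree_def skeleton_edges_def by auto
  have skeleton_of_eq: "skeleton_of T = \<tau>" if "\<tau> \<in> ?ST" "T \<in> ?U \<tau>" for T \<tau>
    using that ST_subset[OF that(1)] unfolding skeleton_of_def piece_forests_def by auto
  have "{T. spanning_tree V E ends T} = (\<Union>\<tau>\<in>?ST. ?U \<tau>)"
  proof (intro set_eqI iffI)
    fix T assume "T \<in> {T. spanning_tree V E ends T}"
    then have T: "spanning_tree V E ends T" by simp
    then have "T \<in> ?U (skeleton_of T)"
      using spanning_tree_imp_pieces(1)[OF T] unfolding spanning_tree_def E_eq
      by (auto simp: piece_forests_def skeleton_of_def)
    moreover have "skeleton_of T \<in> ?ST" using spanning_tree_imp_pieces(2)[OF T] by simp
    ultimately show "T \<in> (\<Union>\<tau>\<in>?ST. ?U \<tau>)" by blast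
  next
    fix T assume "T \<in> (\<Union>\<tau>\<in>?ST. ?U \<tau>)"
    then obtain \<tau> where \<tau>: "\<tau> \<in> ?ST" "T \<in> ?U \<tau>" by blast
    then have "spanning_tree R skeleton_edges skeleton_ends (skeleton_of T)"
      using skeleton_of_eq by simp
    moreover have "T \<subseteq> E" "\<forall>j\<in>J. piece_forest j (T \<inter> P j)"
      using \<tau>(2) unfolding E_eq piece_forests_def by auto
    ultimately show "T \<in> {T. spanning_tree V E ends T}"
      using pieces_imp_spanning_tree by simp
  qed
  also have "card \<dots> = (\<Sum>\<tau>\<in>?ST. card (?U \<tau>))"
  proof (rule card_UN_disjoint)
    have "?ST \<subseteq> Pow skeleton_edges" unfolding spanning_tree_def by blast
    then show "finite ?ST" using finite_skeleton_edges by (simp add: finite_subset)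
    have "finite (?U \<tau>)" for \<tau>
    proof (rule finite_subset)
      show "?U \<tau> \<subseteq> Pow E" unfolding E_eq by blast
    qed (simp add: finite_E)
    then show "\<forall>\<tau>\<in>?ST. finite (?U \<tau>)" by blast
    show "\<forall>\<tau>\<in>?ST. \<forall>\<tau>'\<in>?ST. \<tau> \<noteq> \<tau>' \<longrightarrow> ?U \<tau> \<inter> ?U \<tau>' = {}"
    proof (intro ballI impI)
      fix \<tau> \<tau>' assume "\<tau> \<in> ?ST" "\<tau>' \<in> ?ST" "\<tau> \<noteq> \<tau>'"
      then show "?U \<tau> \<inter> ?U \<tau>' = {}" using skeleton_of_eq[of \<tau>] skeleton_of_eq[of \<tau>'] by blast
    qed
  qed
  also have "\<dots> = (\<Sum>\<tau>\<in>?ST. \<Prod>j\<in>J. card (piece_forests j (j \<in> \<tau>)))"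
  proof (rule sum.cong[OF refl])
    fix \<tau> show "card (?U \<tau>) = (\<Prod>j\<in>J. card (piece_forests j (j \<in> \<tau>)))"
      by (rule card_subsets_by_parts[OF finite_J edges_disjoint])
        (auto simp: piece_forests_def piece_forest_def)
  qed
  finally show ?thesis .
qed

end

lemma reach_compose:
  assumes "\<And>j. j \<in> \<tau> \<Longrightarrow> ends' j = ends (\<pi> j)"
  shows "reach ends' \<tau> = reach ends (\<pi> ` \<tau>)"
proof -
  have "adj ends' \<tau> = adj ends (\<pi> ` \<tau>)" unfolding adj_def using assms by fastforce
  then show ?thesis unfolding reach_def by simp
qed

lemma forest_compose_iff:
  assumes ends': "\<And>j. j \<in> \<tau> \<Longrightarrow> ends' j = ends (\<pi> j)"
  shows "forest ends' \<tau> \<longleftrightarrow> inj_on \<pi> \<tau> \<and> forest ends (\<pi> ` \<tau>)"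
proof -
  have on_cycle_iff: "ends' e \<in> reach ends' (\<tau> - {e}) \<longleftrightarrow> ends (\<pi> e) \<in> reach ends (\<pi> ` \<tau> - {\<pi> e})"
    if "inj_on \<pi> \<tau>" "e \<in> \<tau>" for e
  proof -
    have "\<pi> ` \<tau> - {\<pi> e} = \<pi> ` (\<tau> - {e})" using that by (simp add: inj_on_image_set_diff)
    then show ?thesis using reach_compose[of "\<tau> - {e}" ends' ends \<pi>] ends' that(2) by simp
  qed
  have inj: "inj_on \<pi> \<tau>" if "forest ends' \<tau>"
  proof (rule inj_onI, rule ccontr)
    fix x y assume xy: "x \<in> \<tau>" "y \<in> \<tau>" "\<pi> x = \<pi> y" "x \<noteq> y"
    then have "ends' x = ends' y" using ends' by simp
    moreover have "ends' y \<in> reach ends' (\<tau> - {x})" using xy by (intro reach_edge) simp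
    ultimately show False using that xy(1) unfolding forest_def by auto
  qed
  show ?thesis
    using inj on_cycle_iff unfolding forest_def by (metis (no_types, lifting) image_iff)
qed

lemma spanning_tree_compose_iff:
  assumes "\<And>j. j \<in> E' \<Longrightarrow> ends' j = ends (\<pi> j)" "\<pi> ` E' \<subseteq> E" "\<tau> \<subseteq> E'"
  shows "spanning_tree R E' ends' \<tau> \<longleftrightarrow> inj_on \<pi> \<tau> \<and> spanning_tree R E ends (\<pi> ` \<tau>)"
proof -
  have "\<And>j. j \<in> \<tau> \<Longrightarrow> ends' j = ends (\<pi> j)" using assms(1,3) by blast
  then show ?thesis
    unfolding spanning_tree_def using forest_compose_iff reach_compose assms(2,3) by (metis image_mono order_trans)
qed

locale uniform_cover =
  fixes E1 :: "'e1 set" and E0 :: "'e0 set" and \<pi> :: "'e1 \<Rightarrow> 'e0" and c :: nat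
  assumes finite_E1: "finite E1" and finite_E0: "finite E0"
    and maps_to: "\<pi> ` E1 \<subseteq> E0"
    and card_fibre: "\<And>j. j \<in> E0 \<Longrightarrow> card {j' \<in> E1. \<pi> j' = j} = c"
    and c_pos: "0 < c"
begin

definition fibre :: "'e0 \<Rightarrow> 'e1 set" where
  "fibre j = {j' \<in> E1. \<pi> j' = j}"

lemma finite_fibre: "finite (fibre j)"
  unfolding fibre_def using finite_E1 by simp

lemma card_injective_lifts:
  assumes "\<tau> \<subseteq> E0"
  shows "card {\<tau>'. \<tau>' \<subseteq> E1 \<and> inj_on \<pi> \<tau>' \<and> \<pi> ` \<tau>' = \<tau>} = c ^ card \<tau>"
proof -
  let ?single = "\<lambda>j. (\<lambda>x. {x}) ` fibre j"
  have "{\<tau>'. \<tau>' \<subseteq> E1 \<and> inj_on \<pi> \<tau>' \<and> \<pi> ` \<tau>' = \<tau>} =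
      {\<tau>'. \<tau>' \<subseteq> (\<Union>j\<in>\<tau>. fibre j) \<and> (\<forall>j\<in>\<tau>. \<tau>' \<inter> fibre j \<in> ?single j)}"
  proof (intro set_eqI iffI)
    fix \<tau>' assume "\<tau>' \<in> {\<tau>'. \<tau>' \<subseteq> E1 \<and> inj_on \<pi> \<tau>' \<and> \<pi> ` \<tau>' = \<tau>}"
    then have \<tau>': "\<tau>' \<subseteq> E1" "inj_on \<pi> \<tau>'" "\<pi> ` \<tau>' = \<tau>" by simp_all
    have "\<tau>' \<subseteq> (\<Union>j\<in>\<tau>. fibre j)" using \<tau>'(1,3) unfolding fibre_def by blast
    moreover have "\<tau>' \<inter> fibre j \<in> ?single j" if j: "j \<in> \<tau>" for j
    proof -
      obtain x where x: "x \<in> \<tau>'" "j = \<pi> x" using j \<tau>'(3) by blast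
      then have "\<tau>' \<inter> fibre j = {x}" using \<tau>'(1,2) unfolding fibre_def inj_on_def by blast
      then show "\<tau>' \<inter> fibre j \<in> ?single j" using x \<tau>'(1) unfolding fibre_def by auto
    qed
    ultimately show "\<tau>' \<in> {\<tau>'. \<tau>' \<subseteq> (\<Union>j\<in>\<tau>. fibre j) \<and> (\<forall>j\<in>\<tau>. \<tau>' \<inter> fibre j \<in> ?single j)}"
      by blast
  next
    fix \<tau>' assume "\<tau>' \<in> {\<tau>'. \<tau>' \<subseteq> (\<Union>j\<in>\<tau>. fibre j) \<and> (\<forall>j\<in>\<tau>. \<tau>' \<inter> fibre j \<in> ?single j)}"
    then have sub: "\<tau>' \<subseteq> (\<Union>j\<in>\<tau>. fibre j)" and single: "\<forall>j\<in>\<tau>. \<tau>' \<inter> fibre j \<in> ?single j"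
      by simp_all
    have "inj_on \<pi> \<tau>'"
    proof (rule inj_onI)
      fix x y assume xy: "x \<in> \<tau>'" "y \<in> \<tau>'" "\<pi> x = \<pi> y"
      obtain j where j: "j \<in> \<tau>" "x \<in> fibre j" using sub xy(1) by blast
      obtain z where z: "\<tau>' \<inter> fibre j = {z}" using single j(1) by blast
      have "y \<in> E1" using sub xy(2) unfolding fibre_def by blast
      then have "y \<in> fibre j" using j(2) xy(3) unfolding fibre_def by simp
      then have "x \<in> {z}" "y \<in> {z}" using xy(1,2) j(2) unfolding z[symmetric] by blast+
      then show "x = y" by simp
    qed
    moreover have "\<pi> ` \<tau>' = \<tau>"
    proof
      show "\<pi> ` \<tau>' \<subseteq> \<tau>" using sub unfolding fibre_def by blast
      show "\<tau> \<subseteq> \<pi> ` \<tau>'"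
      proof
        fix j assume "j \<in> \<tau>"
        then obtain x where "\<tau>' \<inter> fibre j = {x}" using single by blast
        then have "x \<in> \<tau>'" "\<pi> x = j" unfolding fibre_def by auto
        then show "j \<in> \<pi> ` \<tau>'" by blast
      qed
    qed
    moreover have "\<tau>' \<subseteq> E1" using sub unfolding fibre_def by blast
    ultimately show "\<tau>' \<in> {\<tau>'. \<tau>' \<subseteq> E1 \<and> inj_on \<pi> \<tau>' \<and> \<pi> ` \<tau>' = \<tau>}" by blast
  qed
  also have "card \<dots> = (\<Prod>j\<in>\<tau>. card (?single j))"
  proof (rule card_subsets_by_parts)
    show "finite \<tau>" using assms finite_E0 by (rule finite_subset)
    show "disjoint_family_on fibre \<tau>" unfolding disjoint_family_on_def fibre_def by blast
  qed blast
  also have "\<dots> = (\<Prod>j\<in>\<tau>. c)"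
    using assms card_fibre by (intro prod.cong) (auto simp: card_image fibre_def)
  finally show ?thesis by simp
qed

lemma prod_lift_weight:
  assumes "\<tau>' \<subseteq> E1" "inj_on \<pi> \<tau>'"
  shows "(\<Prod>j'\<in>E1. if j' \<in> \<tau>' then C (\<pi> j') else F (\<pi> j')) =
    (\<Prod>j\<in>E0. F j ^ (c - 1)) * (\<Prod>j\<in>E0. if j \<in> \<pi> ` \<tau>' then C j else F j)"
proof -
  have "card (fibre j \<inter> \<tau>') = of_bool (j \<in> \<pi> ` \<tau>')" for j
  proof (cases "j \<in> \<pi> ` \<tau>'")
    case True
    then obtain x where x: "x \<in> \<tau>'" "j = \<pi> x" by blast
    then have "fibre j \<inter> \<tau>' = {x}" using assms unfolding fibre_def inj_on_def by blast
    then show ?thesis using True by simp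
  next
    case False
    then have "fibre j \<inter> \<tau>' = {}" unfolding fibre_def by blast
    then show ?thesis using False by simp
  qed
  then have fibre_prod: "(\<Prod>j'\<in>fibre j. if j' \<in> \<tau>' then C j else F j) =
      F j ^ (c - 1) * (if j \<in> \<pi> ` \<tau>' then C j else F j)" if "j \<in> E0" for j
  proof -
    have "(\<Prod>j'\<in>fibre j. if j' \<in> \<tau>' then C j else F j) =
        C j ^ card (fibre j \<inter> \<tau>') * F j ^ card (fibre j - \<tau>')"
      using finite_fibre[of j] by (simp add: prod.If_cases Diff_eq)
    moreover have "card (fibre j - \<tau>') = c - card (fibre j \<inter> \<tau>')"
      using card_Diff_subset_Int[of "fibre j" \<tau>'] finite_fibre[of j] card_fibre[OF that]
      unfolding fibre_def by simp
    moreover obtain c' where "c = Suc c'" using c_pos gr0_implies_Suc by blast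
    ultimately show ?thesis
      using \<open>card (fibre j \<inter> \<tau>') = of_bool (j \<in> \<pi> ` \<tau>')\<close>
      by (cases "j \<in> \<pi> ` \<tau>'") (simp_all add: mult.commute)
  qed
  have "(\<Prod>j'\<in>E1. if j' \<in> \<tau>' then C (\<pi> j') else F (\<pi> j')) =
      (\<Prod>j\<in>E0. \<Prod>j'\<in>fibre j. if j' \<in> \<tau>' then C (\<pi> j') else F (\<pi> j'))"
    unfolding fibre_def by (rule prod.group[OF finite_E1 finite_E0 maps_to, symmetric])
  also have "\<dots> = (\<Prod>j\<in>E0. F j ^ (c - 1) * (if j \<in> \<pi> ` \<tau>' then C j else F j))"
  proof (rule prod.cong[OF refl])
    fix j assume "j \<in> E0"
    have "(\<Prod>j'\<in>fibre j. if j' \<in> \<tau>' then C (\<pi> j') else F (\<pi> j')) =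
        (\<Prod>j'\<in>fibre j. if j' \<in> \<tau>' then C j else F j)"
      by (rule prod.cong) (auto simp: fibre_def)
    then show "(\<Prod>j'\<in>fibre j. if j' \<in> \<tau>' then C (\<pi> j') else F (\<pi> j')) =
        F j ^ (c - 1) * (if j \<in> \<pi> ` \<tau>' then C j else F j)"
      using fibre_prod[OF \<open>j \<in> E0\<close>] by simp
  qed
  finally show ?thesis by (simp add: prod.distrib)
qed

lemma weighted_spanning_tree_sum_lift:
  fixes ends :: "'e0 \<Rightarrow> 'v \<times> 'v" and ends' :: "'e1 \<Rightarrow> 'v \<times> 'v"
  assumes R: "finite R" "R \<noteq> {}" and ends: "\<And>j. j \<in> E0 \<Longrightarrow> ends j \<in> R \<times> R"
    and ends': "\<And>j. j \<in> E1 \<Longrightarrow> ends' j = ends (\<pi> j)"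
  shows "(\<Sum>\<tau>' | spanning_tree R E1 ends' \<tau>'. \<Prod>j'\<in>E1. if j' \<in> \<tau>' then C (\<pi> j') else F (\<pi> j')) =
    c ^ (card R - 1) * (\<Prod>j\<in>E0. F j ^ (c - 1)) *
    (\<Sum>\<tau> | spanning_tree R E0 ends \<tau>. \<Prod>j\<in>E0. if j \<in> \<tau> then C j else F j)"
proof -
  let ?ST1 = "{\<tau>'. spanning_tree R E1 ends' \<tau>'}"
  let ?ST0 = "{\<tau>. spanning_tree R E0 ends \<tau>}"
  let ?w1 = "\<lambda>\<tau>'. \<Prod>j'\<in>E1. if j' \<in> \<tau>' then C (\<pi> j') else F (\<pi> j')"
  let ?w0 = "\<lambda>\<tau>. \<Prod>j\<in>E0. if j \<in> \<tau> then C j else F j"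
  let ?K = "\<Prod>j\<in>E0. F j ^ (c - 1)"
  have ST1_iff: "\<tau>' \<in> ?ST1 \<longleftrightarrow> \<tau>' \<subseteq> E1 \<and> inj_on \<pi> \<tau>' \<and> \<pi> ` \<tau>' \<in> ?ST0" for \<tau>'
  proof (cases "\<tau>' \<subseteq> E1")
    case True
    then show ?thesis using spanning_tree_compose_iff[where ends'=ends' and ends=ends and \<pi>=\<pi>, OF ends' maps_to True] by simp
  qed (auto simp: spanning_tree_def)
  have "?ST1 \<subseteq> Pow E1" "?ST0 \<subseteq> Pow E0" unfolding spanning_tree_def by auto
  then have finite_ST: "finite ?ST1" "finite ?ST0"
    using finite_E1 finite_E0 by (auto intro: finite_subset)
  have "(\<Sum>\<tau>'\<in>?ST1. ?w1 \<tau>') = (\<Sum>\<tau>\<in>?ST0. \<Sum>\<tau>'\<in>{\<tau>' \<in> ?ST1. \<pi> ` \<tau>' = \<tau>}. ?w1 \<tau>')"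
    using ST1_iff by (intro sum.group[OF finite_ST, symmetric]) blast
  also have "\<dots> = (\<Sum>\<tau>\<in>?ST0. c ^ (card R - 1) * ?K * ?w0 \<tau>)"
  proof (rule sum.cong[OF refl])
    fix \<tau> assume \<tau>: "\<tau> \<in> ?ST0"
    have lifts: "{\<tau>' \<in> ?ST1. \<pi> ` \<tau>' = \<tau>} = {\<tau>'. \<tau>' \<subseteq> E1 \<and> inj_on \<pi> \<tau>' \<and> \<pi> ` \<tau>' = \<tau>}"
      using ST1_iff \<tau> by auto
    have "card \<tau> + 1 = card R" "\<tau> \<subseteq> E0"
      using \<tau> spanning_tree_iff_card[OF R finite_E0] ends by auto
    then have "card R - 1 = card \<tau>" "\<tau> \<subseteq> E0" by simp_all
    then have "card {\<tau>' \<in> ?ST1. \<pi> ` \<tau>' = \<tau>} = c ^ (card R - 1)"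
      unfolding lifts by (simp add: card_injective_lifts)
    moreover have "?w1 \<tau>' = ?K * ?w0 \<tau>" if "\<tau>' \<in> {\<tau>' \<in> ?ST1. \<pi> ` \<tau>' = \<tau>}" for \<tau>'
      using that prod_lift_weight[of \<tau>' C F] unfolding lifts by auto
    ultimately show "(\<Sum>\<tau>'\<in>{\<tau>' \<in> ?ST1. \<pi> ` \<tau>' = \<tau>}. ?w1 \<tau>') = c ^ (card R - 1) * ?K * ?w0 \<tau>"
      by simp
  qed
  also have "\<dots> = c ^ (card R - 1) * ?K * (\<Sum>\<tau>\<in>?ST0. ?w0 \<tau>)"
    by (simp add: sum_distrib_left)
  finally show ?thesis .
qed

end

lemma edge_verts_iff: "x \<in> edge_verts ends S \<longleftrightarrow> (\<exists>e\<in>S. x = fst (ends e) \<or> x = snd (ends e))"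
  unfolding edge_verts_def by auto

lemma ramified_edge_verts_adm_path:
  assumes "adm_path E ends m (es, vs)"
  shows "{v \<in> edge_verts ends (set es). ramified m v} = {hd vs, last vs}"
proof -
  have es: "es \<noteq> []" "length vs = length es + 1"
    and step: "\<And>i. i < length es \<Longrightarrow> ends (es!i) = (vs!i, vs!Suc i) \<or> ends (es!i) = (vs!Suc i, vs!i)"
    and ram: "ramified m (hd vs)" "ramified m (last vs)" "\<forall>w\<in>set (butlast (tl vs)). \<not> ramified m w"
    using assms unfolding adm_path_def by auto
  have path_verts: "vs!i \<in> edge_verts ends (set es)" "vs!Suc i \<in> edge_verts ends (set es)"
    if "i < length es" for i
    using step[OF that] nth_mem[OF that] unfolding edge_verts_iff by (metis fst_conv snd_conv)+
  have "edge_verts ends (set es) \<subseteq> set vs"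
  proof
    fix x assume "x \<in> edge_verts ends (set es)"
    then obtain i where "i < length es" "x = fst (ends (es!i)) \<or> x = snd (ends (es!i))"
      unfolding edge_verts_iff by (auto simp: in_set_conv_nth)
    then have "x \<in> {vs!i, vs!Suc i}" "Suc i < length vs" using step[of i] es(2) by auto
    then show "x \<in> set vs" by auto
  qed
  moreover obtain v vs' where vs: "vs = v # vs'" using es(2) by (cases vs) auto
  moreover have "vs' \<noteq> []" using vs es by auto
  then have "set vs' = insert (last vs') (set (butlast vs'))"
    by (metis append_butlast_last_id empty_set list.simps(15) set_append Un_insert_right sup_bot.right_neutral)
  then have "set vs = {hd vs, last vs} \<union> set (butlast (tl vs))"
    using vs \<open>vs' \<noteq> []\<close> by auto
  ultimately have "{v \<in> edge_verts ends (set es). ramified m v} \<subseteq> {hd vs, last vs}"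
    using ram(3) by blast
  moreover have "hd vs \<in> edge_verts ends (set es)" "last vs \<in> edge_verts ends (set es)"
    using path_verts(1)[of 0] path_verts(2)[of "length es - 1"] es vs
    by (simp_all add: hd_conv_nth last_conv_nth)
  ultimately show ?thesis using ram(1,2) by blast
qed

lemma segment_decompositionD:
  assumes "has_segment_decomposition V E ends m"
  shows "\<forall>G\<in>path_groups (two_paths E ends m). \<exists>v v'. \<forall>P\<in>G. path_ends P = {v, v'}"
    and "\<forall>G\<in>path_groups (one_paths E ends m). \<exists>v. \<forall>P\<in>G. path_ends P = {v}"
    and "\<forall>S\<in>segments E ends m. \<forall>S'\<in>segments E ends m. S \<noteq> S' \<longrightarrow>
      S \<inter> S' = {} \<and> edge_verts ends S \<inter> edge_verts ends S' \<subseteq> {v. ramified m v}"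
    and "\<Union>(segments E ends m) = E"
    and "(\<Union>S\<in>segments E ends m. edge_verts ends S) = V"
proof -
  note d = assms[unfolded has_segment_decomposition_def]
  show "\<forall>G\<in>path_groups (two_paths E ends m). \<exists>v v'. \<forall>P\<in>G. path_ends P = {v, v'}"
    using d by (elim conjE)
  show "\<forall>G\<in>path_groups (one_paths E ends m). \<exists>v. \<forall>P\<in>G. path_ends P = {v}"
    using d by (elim conjE)
  show "\<forall>S\<in>segments E ends m. \<forall>S'\<in>segments E ends m. S \<noteq> S' \<longrightarrow>
      S \<inter> S' = {} \<and> edge_verts ends S \<inter> edge_verts ends S' \<subseteq> {v. ramified m v}"
    using d by (elim conjE)
  show "\<Union>(segments E ends m) = E" using d by (elim conjE)
  show "(\<Union>S\<in>segments E ends m. edge_verts ends S) = V" using d by (elim conjE)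
qed

lemma adm_path_group:
  assumes G: "G \<in> path_groups Ps" and adm: "\<forall>P\<in>Ps. adm_path E ends m P"
  shows "G \<noteq> {}" "G \<subseteq> Ps" "group_edges G \<subseteq> E" "group_edges G \<noteq> {}"
proof -
  obtain x where x: "x \<in> Ps" "G = (share_rel Ps)\<^sup>+ `` {x}"
    using G unfolding path_groups_def by (rule quotientE) simp
  have nonempty: "path_edges P \<noteq> {}" "path_edges P \<subseteq> E" if P: "P \<in> Ps" for P
  proof -
    obtain es vs where "P = (es, vs)" by fastforce
    then show "path_edges P \<noteq> {}" "path_edges P \<subseteq> E"
      using adm P unfolding adm_path_def path_edges_def by auto
  qed
  have "(x, x) \<in> share_rel Ps" using x(1) nonempty(1)[OF x(1)] unfolding share_rel_def by simp
  then show "G \<noteq> {}" using x(2) by auto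
  have "share_rel Ps \<subseteq> Ps \<times> Ps" unfolding share_rel_def by auto
  then have "(share_rel Ps)\<^sup>+ \<subseteq> Ps \<times> Ps" by (rule trancl_subset_Sigma)
  then show "G \<subseteq> Ps" using x(2) by blast
  then show "group_edges G \<subseteq> E" "group_edges G \<noteq> {}"
    using nonempty \<open>G \<noteq> {}\<close> unfolding group_edges_def by (auto simp: subset_eq)
qed

lemma ramified_edge_verts_group:
  assumes adm: "\<forall>P\<in>G. adm_path E ends m P" and ends: "\<forall>P\<in>G. path_ends P = Z" and "G \<noteq> {}"
  shows "{v \<in> edge_verts ends (group_edges G). ramified m v} = Z"
proof -
  have "{v \<in> edge_verts ends (path_edges P). ramified m v} = Z" if "P \<in> G" for P
    using ramified_edge_verts_adm_path[of E ends m "fst P" "snd P"] adm ends that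
    unfolding path_edges_def path_ends_def by simp
  moreover have "edge_verts ends (group_edges G) = (\<Union>P\<in>G. edge_verts ends (path_edges P))"
    unfolding group_edges_def edge_verts_def by blast
  ultimately show ?thesis using \<open>G \<noteq> {}\<close> by blast
qed

lemma segment_ramified_verts:
  assumes dec: "has_segment_decomposition V E ends m" and S: "S \<in> segments E ends m"
  shows "S \<subseteq> E" and "S \<noteq> {}"
    and "\<exists>u w. {v \<in> edge_verts ends S. ramified m v} = {u, w} \<and> (u \<noteq> w \<longleftrightarrow> S \<in> segs2 E ends m)"
proof -
  have "S \<subseteq> E \<and> S \<noteq> {} \<and>
    (\<exists>u w. {v \<in> edge_verts ends S. ramified m v} = {u, w} \<and> (u \<noteq> w \<longleftrightarrow> S \<in> segs2 E ends m))"
  proof (cases "S \<in> segs2 E ends m")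
    case True
    then obtain G where G: "G \<in> path_groups (two_paths E ends m)" "S = group_edges G"
      unfolding segs2_def by blast
    have adm: "\<forall>P\<in>two_paths E ends m. adm_path E ends m P" unfolding two_paths_def by blast
    obtain v v' where vv': "\<forall>P\<in>G. path_ends P = {v, v'}"
      using bspec[OF segment_decompositionD(1)[OF dec] G(1)] by blast
    note group = adm_path_group[OF G(1) adm]
    obtain P where "P \<in> G" using group(1) by blast
    then have "v \<noteq> v'" using vv' group(2) unfolding two_paths_def path_ends_def by (auto simp: doubleton_eq_iff)
    moreover have "\<forall>P\<in>G. adm_path E ends m P" using group(2) adm by blast
    then have "{x \<in> edge_verts ends S. ramified m x} = {v, v'}"
      using ramified_edge_verts_group[OF _ vv' group(1)] G(2) by blast
    ultimately show ?thesis using group(3,4) G(2) True by (intro conjI exI[of _ v] exI[of _ v']) simp_all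
  next
    case False
    then have "S \<in> segs1 E ends m" using S unfolding segments_def by blast
    then obtain G where G: "G \<in> path_groups (one_paths E ends m)" "S = group_edges G"
      unfolding segs1_def by blast
    have adm: "\<forall>P\<in>one_paths E ends m. adm_path E ends m P" unfolding one_paths_def by blast
    obtain v where v: "\<forall>P\<in>G. path_ends P = {v}"
      using bspec[OF segment_decompositionD(2)[OF dec] G(1)] by blast
    note group = adm_path_group[OF G(1) adm]
    have "\<forall>P\<in>G. adm_path E ends m P" using group(2) adm by blast
    then have "{x \<in> edge_verts ends S. ramified m x} = {v, v}"
      using ramified_edge_verts_group[OF _ v group(1)] G(2) by simp
    then show ?thesis using group(3,4) G(2) False by (intro conjI exI[of _ v]) simp_all
  qed
  then show "S \<subseteq> E" "S \<noteq> {}"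
    "\<exists>u w. {v \<in> edge_verts ends S. ramified m v} = {u, w} \<and> (u \<noteq> w \<longleftrightarrow> S \<in> segs2 E ends m)"
    by blast+
qed

lemma segs1_segs2_disjoint:
  assumes "has_segment_decomposition V E ends m"
  shows "segs1 E ends m \<inter> segs2 E ends m = {}"
proof -
  have "S \<subseteq> E - \<Union>(segs2 E ends m)" if S: "S \<in> segs1 E ends m" for S
  proof -
    obtain G where G: "G \<in> path_groups (one_paths E ends m)" "S = group_edges G"
      using S unfolding segs1_def by blast
    have "G \<subseteq> one_paths E ends m" using adm_path_group(2)[OF G(1)] unfolding one_paths_def by blast
    then show ?thesis using G(2) unfolding one_paths_def group_edges_def by blast
  qed
  moreover have "S \<noteq> {}" if "S \<in> segs1 E ends m" for S
    using segment_ramified_verts(2)[OF assms] that unfolding segments_def by blast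
  ultimately show ?thesis by blast
qed

lemma ram_exp_le: "ram_exp m n x \<le> n"
  unfolding ram_exp_def by (cases "m x") auto

lemma ram_exp_unramified: "\<not> ramified m x \<Longrightarrow> ram_exp m n x = n"
  unfolding ramified_def ram_exp_def by simp

lemma ram_exp_mono: "n \<le> n' \<Longrightarrow> ram_exp m n x \<le> ram_exp m n' x"
  unfolding ram_exp_def by (cases "m x") auto

lemma ram_exp_stable: "m x \<le> enat n0 \<Longrightarrow> n0 \<le> n \<Longrightarrow> ram_exp m n x = ram_exp m n0 x"
  unfolding ram_exp_def by (cases "m x") auto

lemma rtrancl_map_prod_iff:
  assumes inj: "inj \<phi>"
  shows "((\<phi> x, \<phi> y) \<in> (map_prod \<phi> \<phi> ` R)\<^sup>*) \<longleftrightarrow> ((x,y) \<in> R\<^sup>*)"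
proof
  assume "(x,y) \<in> R\<^sup>*"
  then show "(\<phi> x, \<phi> y) \<in> (map_prod \<phi> \<phi> ` R)\<^sup>*"
  proof (induction rule: rtrancl_induct)
    case base then show ?case by simp
  next
    case (step y z)
    have "(\<phi> y, \<phi> z) \<in> map_prod \<phi> \<phi> ` R" using step(2) by force
    with step(3) show ?case by (rule rtrancl_into_rtrancl)
  qed
next
  have gen: "\<exists>y'. v = \<phi> y' \<and> (x,y') \<in> R\<^sup>*" if "(u,v) \<in> (map_prod \<phi> \<phi> ` R)\<^sup>*" "u = \<phi> x" for u v
    using that
  proof (induction rule: rtrancl_induct)
    case base then show ?case by blast
  next
    case (step v w)
    obtain y' where y': "v = \<phi> y'" "(x,y') \<in> R\<^sup>*" using step(3) step(4) by blast
    obtain y1 y2 where yy: "(y1,y2) \<in> R" "v = \<phi> y1" "w = \<phi> y2" using step(2) by auto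
    have "y1 = y'" using yy(2) y'(1) inj by (simp add: inj_eq)
    then have "(x,y2) \<in> R\<^sup>*" using y'(2) yy(1) by simp
    then show ?case using yy(3) by blast
  qed
  assume "(\<phi> x, \<phi> y) \<in> (map_prod \<phi> \<phi> ` R)\<^sup>*"
  then obtain y' where "\<phi> y = \<phi> y'" "(x,y') \<in> R\<^sup>*" using gen by blast
  then show "(x,y) \<in> R\<^sup>*" using inj by (simp add: inj_eq)
qed

lemma adj_image:
  assumes "\<forall>e\<in>f. ends' (h e) = map_prod \<phi> \<phi> (ends e)"
  shows "adj ends' (h ` f) = map_prod \<phi> \<phi> ` adj ends f"
proof
  show "adj ends' (h ` f) \<subseteq> map_prod \<phi> \<phi> ` adj ends f"
  proof
    fix z assume "z \<in> adj ends' (h ` f)"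
    then obtain u v e where z: "z = (u,v)" "e \<in> f" "ends' (h e) = (u,v) \<or> ends' (h e) = (v,u)"
      unfolding adj_def by auto
    obtain x y where xy: "ends e = (x,y)" by (cases "ends e")
    have "ends' (h e) = (\<phi> x, \<phi> y)" using assms z(2) xy by simp
    then have "(u,v) = map_prod \<phi> \<phi> (x,y) \<and> (x,y) \<in> adj ends f \<or> (u,v) = map_prod \<phi> \<phi> (y,x) \<and> (y,x) \<in> adj ends f"
      using z(2,3) xy unfolding adj_def by auto
    then show "z \<in> map_prod \<phi> \<phi> ` adj ends f" using z(1) by blast
  qed
  show "map_prod \<phi> \<phi> ` adj ends f \<subseteq> adj ends' (h ` f)"
  proof
    fix z assume "z \<in> map_prod \<phi> \<phi> ` adj ends f"
    then obtain x y e where z: "z = (\<phi> x, \<phi> y)" "e \<in> f" "ends e = (x,y) \<or> ends e = (y,x)"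
      unfolding adj_def by auto
    have "ends' (h e) = (\<phi> x, \<phi> y) \<or> ends' (h e) = (\<phi> y, \<phi> x)" using assms z(2,3) by auto
    then show "z \<in> adj ends' (h ` f)" using z(1,2) unfolding adj_def by auto
  qed
qed

lemma reach_image_iff:
  assumes "\<forall>e\<in>f. ends' (h e) = map_prod \<phi> \<phi> (ends e)" and "inj \<phi>"
  shows "((\<phi> x, \<phi> y) \<in> reach ends' (h ` f)) \<longleftrightarrow> ((x,y) \<in> reach ends f)"
proof -
  have "adj ends' (h ` f) = map_prod \<phi> \<phi> ` adj ends f" using adj_image[of f ends' h \<phi> ends] assms(1) by blast
  then show ?thesis unfolding reach_def using rtrancl_map_prod_iff[OF assms(2), of x y "adj ends f"] by simp
qed

lemma forest_image_iff:
  assumes em: "\<forall>e\<in>f. ends' (h e) = map_prod \<phi> \<phi> (ends e)" and inj: "inj \<phi>" and injh: "inj_on h f"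
  shows "forest ends' (h ` f) \<longleftrightarrow> forest ends f"
proof -
  have key: "ends' (h e) \<in> reach ends' (h ` f - {h e}) \<longleftrightarrow> ends e \<in> reach ends (f - {e})" if e: "e \<in> f" for e
  proof -
    have "h ` f - {h e} = h ` (f - {e})" using inj_on_image_set_diff[OF injh, of f "{e}"] e by auto
    moreover obtain x y where xy: "ends e = (x,y)" by (cases "ends e")
    moreover have "ends' (h e) = (\<phi> x, \<phi> y)" using em e xy by simp
    moreover have "\<forall>e\<in>f - {e}. ends' (h e) = map_prod \<phi> \<phi> (ends e)" using em by blast
    ultimately show ?thesis using reach_image_iff[of "f - {e}" ends' h \<phi> ends x y] inj by simp
  qed
  show ?thesis
  proof
    assume fo: "forest ends' (h ` f)"
    show "forest ends f" unfolding forest_def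
    proof
      fix e assume e: "e \<in> f"
      have "h e \<in> h ` f" using e by simp
      then show "ends e \<notin> reach ends (f - {e})" using fo key[OF e] unfolding forest_def by blast
    qed
  next
    assume fo: "forest ends f"
    show "forest ends' (h ` f)" unfolding forest_def
    proof
      fix e' assume "e' \<in> h ` f"
      then obtain e where e: "e \<in> f" "e' = h e" by blast
      show "ends' e' \<notin> reach ends' (h ` f - {e'})" using fo key[OF e(1)] e unfolding forest_def by blast
    qed
  qed
qed

lemma two_rooted_forest_iff:
  assumes T: "T \<subseteq> S" and ram: "{v \<in> edge_verts ends S. ramified m v} = {a, b}"
  defines "W \<equiv> edge_verts ends S"
  shows "(\<forall>x\<in>W. (x, a) \<in> reach ends T \<or> (x, b) \<in> reach ends T) \<and> \<not> (a \<noteq> b \<and> (a, b) \<in> reach ends T)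
    \<longleftrightarrow> card (forest_components ends W T) = card {a, b} \<and>
      (\<forall>C\<in>forest_components ends W T. card {v \<in> C. ramified m v} = 1)"
proof -
  have ab: "a \<in> W" "b \<in> W" using ram unfolding W_def by blast+
  have "edge_verts ends T \<subseteq> W" using T unfolding W_def edge_verts_def by blast
  then have stays: "v \<in> W" if "x \<in> W" "(x, v) \<in> reach ends T" for x v
    using reach_imp_edge_verts[OF that(2)] that(1) by blast
  have ram_class: "{v \<in> reach ends T `` {x}. ramified m v} = {a, b} \<inter> reach ends T `` {x}" if "x \<in> W" for x
    using stays[OF that] ram unfolding W_def by blast
  show ?thesis
  proof
    assume reaches: "(\<forall>x\<in>W. (x, a) \<in> reach ends T \<or> (x, b) \<in> reach ends T) \<and>
      \<not> (a \<noteq> b \<and> (a, b) \<in> reach ends T)"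
    have "card (forest_components ends W T) = card {a, b}"
      using card_forest_components_two[OF ab reaches[THEN conjunct1]] reaches by (cases "a = b") auto
    moreover have "card {v \<in> reach ends T `` {x}. ramified m v} = 1" if "x \<in> W" for x
    proof -
      have "(x, a) \<in> reach ends T \<or> (x, b) \<in> reach ends T" using reaches that by blast
      moreover have "a = b" if "(x, a) \<in> reach ends T" "(x, b) \<in> reach ends T"
        using reaches reach_trans[OF reach_sym[OF that(1)] that(2)] by blast
      ultimately have "{a, b} \<inter> reach ends T `` {x} = {a} \<or> {a, b} \<inter> reach ends T `` {x} = {b}"
        by auto
      then show ?thesis using ram_class[OF that] by auto
    qed
    ultimately show "card (forest_components ends W T) = card {a, b} \<and>
        (\<forall>C\<in>forest_components ends W T. card {v \<in> C. ramified m v} = 1)"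
      unfolding forest_components_def by auto
  next
    assume one: "card (forest_components ends W T) = card {a, b} \<and>
      (\<forall>C\<in>forest_components ends W T. card {v \<in> C. ramified m v} = 1)"
    then have one_ram: "card ({a, b} \<inter> reach ends T `` {x}) = 1" if "x \<in> W" for x
      using ram_class[OF that] that unfolding forest_components_def by auto
    have "(x, a) \<in> reach ends T \<or> (x, b) \<in> reach ends T" if "x \<in> W" for x
    proof -
      have "{a, b} \<inter> reach ends T `` {x} \<noteq> {}" using one_ram[OF that] by (metis card.empty zero_neq_one)
      then show ?thesis by blast
    qed
    moreover have "\<not> (a \<noteq> b \<and> (a, b) \<in> reach ends T)"
    proof
      assume "a \<noteq> b \<and> (a, b) \<in> reach ends T"
      then have "{a, b} \<inter> reach ends T `` {a} = {a, b}" by auto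
      then show False using one_ram[OF ab(1)] \<open>a \<noteq> b \<and> _\<close> by simp
    qed
    ultimately show "(\<forall>x\<in>W. (x, a) \<in> reach ends T \<or> (x, b) \<in> reach ends T) \<and>
        \<not> (a \<noteq> b \<and> (a, b) \<in> reach ends T)" by blast
  qed
qed

lemma card_residue_class:
  fixes q r g0 :: nat
  assumes q: "0 < q" and g0: "g0 < q"
  shows "card {x \<in> {0..<q*r}. x mod q = g0} = r"
proof -
  have eq: "{x \<in> {0..<q*r}. x mod q = g0} = (\<lambda>t. g0 + q*t) ` {0..<r}"
  proof
    show "{x \<in> {0..<q*r}. x mod q = g0} \<subseteq> (\<lambda>t. g0 + q*t) ` {0..<r}"
    proof
      fix x assume "x \<in> {x \<in> {0..<q*r}. x mod q = g0}"
      then have x: "x < q*r" "x mod q = g0" by auto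
      have d: "x = g0 + q * (x div q)" using x(2) by (metis add.commute div_mult_mod_eq mult.commute)
      have "x div q < r" using x(1) q by (simp add: div_less_iff_less_mult mult.commute)
      then show "x \<in> (\<lambda>t. g0 + q*t) ` {0..<r}" using d by (intro image_eqI[where x="x div q"]) auto
    qed
    show "(\<lambda>t. g0 + q*t) ` {0..<r} \<subseteq> {x \<in> {0..<q*r}. x mod q = g0}"
    proof
      fix x assume "x \<in> (\<lambda>t. g0 + q*t) ` {0..<r}"
      then obtain t where t: "t < r" "x = g0 + q*t" by auto
      have "g0 + q*t < q + q*t" using g0 by simp
      also have "\<dots> = q * (t+1)" by simp
      also have "\<dots> \<le> q * r" using t(1) by (intro mult_le_mono2) simp
      finally have "x < q*r" using t(2) by simp
      moreover have "x mod q = g0" using t(2) g0 by simp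
      ultimately show "x \<in> {x \<in> {0..<q*r}. x mod q = g0}" by simp
    qed
  qed
  have "inj_on (\<lambda>t. g0 + q*t) {0..<r}" using q by (intro inj_onI) simp
  then show ?thesis unfolding eq by (simp add: card_image)
qed

locale segment_tower =
  fixes p :: nat and V :: "'v set" and E :: "'e set" and ends :: "'e \<Rightarrow> 'v \<times> 'v"
    and m :: "'v \<Rightarrow> enat"
  assumes p_gt_1: "1 < p" and graph: "is_graph V E ends"
    and totally_ramified_vertex: "\<exists>v\<in>V. totally_ramified m v"
    and decomposition: "has_segment_decomposition V E ends m"
begin

abbreviation segs :: "'e set set" where
  "segs \<equiv> segments E ends m"

definition seg_junctions :: "'e set \<Rightarrow> 'v \<times> 'v" where
  "seg_junctions S = (SOME (u, w). {v \<in> edge_verts ends S. ramified m v} = {u, w} \<and>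
     (u \<noteq> w \<longleftrightarrow> S \<in> segs2 E ends m))"

definition seg_a :: "'e set \<Rightarrow> 'v" where
  "seg_a S = fst (seg_junctions S)"

definition seg_b :: "'e set \<Rightarrow> 'v" where
  "seg_b S = snd (seg_junctions S)"

lemma seg_junctions:
  assumes "S \<in> segs"
  shows "{v \<in> edge_verts ends S. ramified m v} = {seg_a S, seg_b S}"
    and "seg_a S \<noteq> seg_b S \<longleftrightarrow> S \<in> segs2 E ends m"
proof -
  obtain u w where "{v \<in> edge_verts ends S. ramified m v} = {u, w} \<and> (u \<noteq> w \<longleftrightarrow> S \<in> segs2 E ends m)"
    using segment_ramified_verts(3)[OF decomposition assms] by blast
  then have "case seg_junctions S of (u, w) \<Rightarrow>
      {v \<in> edge_verts ends S. ramified m v} = {u, w} \<and> (u \<noteq> w \<longleftrightarrow> S \<in> segs2 E ends m)"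
    unfolding seg_junctions_def by (intro someI[of "\<lambda>(u, w). _ u w" "(u, w)"]) simp
  then show "{v \<in> edge_verts ends S. ramified m v} = {seg_a S, seg_b S}"
    and "seg_a S \<noteq> seg_b S \<longleftrightarrow> S \<in> segs2 E ends m"
    unfolding seg_a_def seg_b_def by (simp_all split: prod.splits)
qed

lemma finite_V: "finite V" and finite_E: "finite E" and ends_in_V: "e \<in> E \<Longrightarrow> ends e \<in> V \<times> V"
  using graph unfolding is_graph_def by auto

lemma segment_subset: "S \<in> segs \<Longrightarrow> S \<subseteq> E"
  using segment_ramified_verts(1)[OF decomposition] .

lemma edge_verts_segment_subset: "S \<in> segs \<Longrightarrow> edge_verts ends S \<subseteq> V"
  unfolding edge_verts_def using segment_subset ends_in_V by fastforce

lemma finite_segs: "finite segs"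
  using finite_E segment_subset by (meson Pow_iff finite_Pow_iff finite_subset subsetI)

lemma segs_eq: "segs = segs1 E ends m \<union> segs2 E ends m"
  unfolding segments_def by blast

lemma seg_junctions_in:
  assumes "S \<in> segs"
  shows "seg_a S \<in> edge_verts ends S" "seg_b S \<in> edge_verts ends S"
    "ramified m (seg_a S)" "ramified m (seg_b S)"
  using seg_junctions(1)[OF assms] by blast+

definition layer_vert :: "nat \<Rightarrow> nat \<Rightarrow> 'v \<Rightarrow> 'v \<times> nat" where
  "layer_vert n g x = (x, g mod p ^ ram_exp m n x)"

definition ram_layer_verts :: "nat \<Rightarrow> ('v \<times> nat) set" where
  "ram_layer_verts n = {x \<in> layer_verts p V m n. ramified m (fst x)}"

definition layer_pieces :: "nat \<Rightarrow> ('e set \<times> nat) set" where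
  "layer_pieces n = segs \<times> {0..<p ^ n}"

definition piece_edges :: "'e set \<times> nat \<Rightarrow> ('e \<times> nat) set" where
  "piece_edges j = fst j \<times> {snd j}"

definition piece_inner :: "'e set \<times> nat \<Rightarrow> ('v \<times> nat) set" where
  "piece_inner j = {(x, snd j) | x. x \<in> edge_verts ends (fst j) \<and> \<not> ramified m x}"

definition piece_a :: "nat \<Rightarrow> 'e set \<times> nat \<Rightarrow> 'v \<times> nat" where
  "piece_a n j = layer_vert n (snd j) (seg_a (fst j))"

definition piece_b :: "nat \<Rightarrow> 'e set \<times> nat \<Rightarrow> 'v \<times> nat" where
  "piece_b n j = layer_vert n (snd j) (seg_b (fst j))"

lemma p_pos: "0 < p"
  using p_gt_1 by simp

lemma inj_layer_vert: "inj (layer_vert n g)"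
  unfolding layer_vert_def by (rule injI) simp

lemma layer_vert_unramified: "\<not> ramified m x \<Longrightarrow> g < p ^ n \<Longrightarrow> layer_vert n g x = (x, g)"
  unfolding layer_vert_def by (simp add: ram_exp_unramified)

lemma layer_ends_eq: "layer_ends p ends m n (e, g) = map_prod (layer_vert n g) (layer_vert n g) (ends e)"
  unfolding layer_ends_def layer_vert_def by (cases "ends e") simp

lemma layer_vert_in_ram_layer_verts:
  "x \<in> V \<Longrightarrow> ramified m x \<Longrightarrow> layer_vert n g x \<in> ram_layer_verts n"
  unfolding ram_layer_verts_def layer_verts_def layer_vert_def using p_pos by simp

lemma finite_layer_verts: "finite (layer_verts p V m n)"
proof -
  have "p ^ ram_exp m n v \<le> p ^ n" for v using p_pos ram_exp_le[of m n v] by (simp add: power_increasing)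
  then have "layer_verts p V m n \<subseteq> V \<times> {0..<p ^ n}"
    unfolding layer_verts_def using less_le_trans by fastforce
  then show ?thesis using finite_V finite_subset by blast
qed

lemma ram_layer_verts_nonempty: "ram_layer_verts n \<noteq> {}"
proof -
  obtain v where "v \<in> V" "m v = 0" using totally_ramified_vertex unfolding totally_ramified_def by blast
  then have "(v, 0) \<in> ram_layer_verts n"
    unfolding ram_layer_verts_def layer_verts_def ramified_def ram_exp_def using p_pos
    by (simp add: zero_enat_def)
  then show ?thesis by blast
qed

lemma layer_verts_eq:
  "layer_verts p V m n = ram_layer_verts n \<union> (\<Union>j\<in>layer_pieces n. piece_inner j)"
proof (intro equalityI subsetI)
  fix z assume z: "z \<in> layer_verts p V m n"
  then obtain x g where xg: "z = (x, g)" "x \<in> V" "g < p ^ ram_exp m n x"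
    unfolding layer_verts_def by auto
  show "z \<in> ram_layer_verts n \<union> (\<Union>j\<in>layer_pieces n. piece_inner j)"
  proof (cases "ramified m x")
    case True
    then show ?thesis using z xg unfolding ram_layer_verts_def by simp
  next
    case False
    obtain S where "S \<in> segs" "x \<in> edge_verts ends S"
      using segment_decompositionD(5)[OF decomposition] xg(2) by blast
    then have "(S, g) \<in> layer_pieces n" "z \<in> piece_inner (S, g)"
      unfolding layer_pieces_def piece_inner_def using xg False by (auto simp: ram_exp_unramified)
    then show ?thesis by blast
  qed
next
  fix z assume "z \<in> ram_layer_verts n \<union> (\<Union>j\<in>layer_pieces n. piece_inner j)"
  then show "z \<in> layer_verts p V m n"
    unfolding ram_layer_verts_def layer_pieces_def piece_inner_def layer_verts_def
    using edge_verts_segment_subset by (auto simp: ram_exp_unramified)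
qed

lemma layer_edges_eq: "layer_edges p E n = (\<Union>j\<in>layer_pieces n. piece_edges j)"
proof -
  have "e \<in> E \<longleftrightarrow> (\<exists>S\<in>segs. e \<in> S)" for e
    using segment_decompositionD(4)[OF decomposition] by blast
  then show ?thesis unfolding layer_edges_def layer_pieces_def piece_edges_def by auto
qed

lemma disjoint_piece_inner: "disjoint_family_on piece_inner (layer_pieces n)"
  unfolding disjoint_family_on_def
proof (intro ballI impI)
  fix j k assume jk: "j \<in> layer_pieces n" "k \<in> layer_pieces n" "j \<noteq> k"
  show "piece_inner j \<inter> piece_inner k = {}"
  proof (rule ccontr)
    assume "piece_inner j \<inter> piece_inner k \<noteq> {}"
    then obtain x where x: "x \<in> edge_verts ends (fst j)" "x \<in> edge_verts ends (fst k)"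
      "\<not> ramified m x" "snd j = snd k"
      unfolding piece_inner_def by auto
    moreover have "fst j \<in> segs" "fst k \<in> segs" using jk unfolding layer_pieces_def by auto
    ultimately have "fst j = fst k" using segment_decompositionD(3)[OF decomposition] by blast
    then show False using jk(3) x(4) by (simp add: prod_eq_iff)
  qed
qed

lemma disjoint_piece_edges: "disjoint_family_on piece_edges (layer_pieces n)"
  unfolding disjoint_family_on_def
proof (intro ballI impI)
  fix j k assume "j \<in> layer_pieces n" "k \<in> layer_pieces n" "j \<noteq> k"
  then have "fst j \<in> segs" "fst k \<in> segs" "fst j \<noteq> fst k \<or> snd j \<noteq> snd k"
    unfolding layer_pieces_def by (auto simp: prod_eq_iff)
  then show "piece_edges j \<inter> piece_edges k = {}"
    using segment_decompositionD(3)[OF decomposition] unfolding piece_edges_def by blast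
qed

lemma layer_vert_in_piece:
  assumes "S \<in> segs" "g < p ^ n" "x \<in> edge_verts ends S"
  shows "layer_vert n g x \<in> insert (piece_a n (S, g)) (insert (piece_b n (S, g)) (piece_inner (S, g)))"
proof (cases "ramified m x")
  case True
  then have "x = seg_a S \<or> x = seg_b S" using seg_junctions(1)[OF assms(1)] assms(3) by blast
  then show ?thesis unfolding piece_a_def piece_b_def by auto
next
  case False
  then show ?thesis using assms layer_vert_unramified unfolding piece_inner_def by simp
qed

lemma glued_layer:
  "glued_graph (layer_verts p V m n) (layer_edges p E n) (layer_ends p ends m n) (ram_layer_verts n)
     (layer_pieces n) piece_edges piece_inner (piece_a n) (piece_b n)"
proof
  show "finite (layer_verts p V m n)" by (rule finite_layer_verts)
  show "finite (layer_edges p E n)" unfolding layer_edges_def using finite_E by simp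
  show "finite (layer_pieces n)" unfolding layer_pieces_def using finite_segs by simp
  show "ram_layer_verts n \<noteq> {}" by (rule ram_layer_verts_nonempty)
  show "layer_verts p V m n = ram_layer_verts n \<union> (\<Union>j\<in>layer_pieces n. piece_inner j)"
    by (rule layer_verts_eq)
  show "ram_layer_verts n \<inter> piece_inner j = {}" for j
    unfolding ram_layer_verts_def piece_inner_def by auto
  show "disjoint_family_on piece_inner (layer_pieces n)" by (rule disjoint_piece_inner)
  show "layer_edges p E n = (\<Union>j\<in>layer_pieces n. piece_edges j)" by (rule layer_edges_eq)
  show "disjoint_family_on piece_edges (layer_pieces n)" by (rule disjoint_piece_edges)
  show "piece_a n j \<in> ram_layer_verts n \<and> piece_b n j \<in> ram_layer_verts n" if "j \<in> layer_pieces n" for j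
    using that seg_junctions_in edge_verts_segment_subset layer_vert_in_ram_layer_verts
    unfolding layer_pieces_def piece_a_def piece_b_def by (auto simp: subset_iff)
  fix j e assume j: "j \<in> layer_pieces n" and e: "e \<in> piece_edges j"
  obtain S g where Sg: "j = (S, g)" "S \<in> segs" "g < p ^ n" using j unfolding layer_pieces_def by auto
  obtain e0 where e0: "e = (e0, g)" "e0 \<in> S" using e Sg unfolding piece_edges_def by auto
  obtain x y where xy: "ends e0 = (x, y)" by fastforce
  then have "x \<in> edge_verts ends S" "y \<in> edge_verts ends S"
    using e0(2) unfolding edge_verts_iff by (metis fst_conv snd_conv)+
  moreover have "layer_ends p ends m n e = (layer_vert n g x, layer_vert n g y)"
    unfolding e0(1) layer_ends_eq xy by simp
  ultimately show "layer_ends p ends m n e \<in> insert (piece_a n j) (insert (piece_b n j) (piece_inner j)) \<times>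
      insert (piece_a n j) (insert (piece_b n j) (piece_inner j))"
    unfolding Sg(1) by (simp only:) (intro SigmaI layer_vert_in_piece[OF Sg(2,3)])
qed

definition seg_forests :: "'e set \<Rightarrow> bool \<Rightarrow> 'e set set" where
  "seg_forests S \<beta> = {f. f \<subseteq> S \<and> forest ends f \<and>
     (\<forall>x\<in>edge_verts ends S. (x, seg_a S) \<in> reach ends f \<or> (x, seg_b S) \<in> reach ends f) \<and>
     (seg_a S \<noteq> seg_b S \<and> (seg_a S, seg_b S) \<in> reach ends f) = \<beta>}"

definition layer_skeleton_ends :: "nat \<Rightarrow> 'e set \<times> nat \<Rightarrow> ('v \<times> nat) \<times> ('v \<times> nat)" where
  "layer_skeleton_ends n j = (piece_a n j, piece_b n j)"

definition skeleton_sum :: "nat \<Rightarrow> nat" where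
  "skeleton_sum n = (\<Sum>\<tau> | spanning_tree (ram_layer_verts n) (segs2 E ends m \<times> {0..<p ^ n}) (layer_skeleton_ends n) \<tau>.
     \<Prod>j\<in>segs2 E ends m \<times> {0..<p ^ n}. card (seg_forests (fst j) (j \<in> \<tau>)))"

lemma card_seg_forests_False:
  assumes "S \<in> segs"
  shows "card (seg_forests S False) = F_count ends m (seg_t ends m S) S"
proof -
  have "seg_t ends m S = card {seg_a S, seg_b S}"
    unfolding seg_t_def seg_junctions(1)[OF assms] ..
  then have "seg_forests S False = {T. T \<subseteq> S \<and> forest ends T \<and>
      card (forest_components ends (edge_verts ends S) T) = seg_t ends m S \<and>
      (\<forall>C\<in>forest_components ends (edge_verts ends S) T. card {v \<in> C. ramified m v} = 1)}"
    unfolding seg_forests_def using two_rooted_forest_iff[OF _ seg_junctions(1)[OF assms]] by auto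
  then show ?thesis unfolding F_count_def by simp
qed

end

locale segment_tower_layer = segment_tower + fixes n :: nat

sublocale segment_tower_layer \<subseteq> layer: glued_graph "layer_verts p V m n" "layer_edges p E n"
  "layer_ends p ends m n" "ram_layer_verts n" "layer_pieces n" piece_edges piece_inner "piece_a n" "piece_b n"
  by (rule glued_layer)

context segment_tower_layer
begin

lemma piece_verts_eq:
  assumes "S \<in> segs" "g < p ^ n"
  shows "layer.piece_verts (S, g) = layer_vert n g ` edge_verts ends S"
proof
  show "layer_vert n g ` edge_verts ends S \<subseteq> layer.piece_verts (S, g)"
    using layer_vert_in_piece[OF assms] unfolding layer.piece_verts_def by blast
  show "layer.piece_verts (S, g) \<subseteq> layer_vert n g ` edge_verts ends S"
    using seg_junctions_in[OF assms(1)] layer_vert_unramified[OF _ assms(2)]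
    unfolding layer.piece_verts_def piece_a_def piece_b_def piece_inner_def by force
qed

lemma piece_lift_iff:
  assumes "f \<subseteq> S"
  shows "forest (layer_ends p ends m n) (f \<times> {g}) \<longleftrightarrow> forest ends f"
    and "(layer_vert n g x, layer_vert n g y) \<in> reach (layer_ends p ends m n) (f \<times> {g}) \<longleftrightarrow>
      (x, y) \<in> reach ends f"
proof -
  have lift: "f \<times> {g} = (\<lambda>e. (e, g)) ` f" by auto
  have ends: "\<forall>e\<in>f. layer_ends p ends m n ((\<lambda>e. (e, g)) e) = map_prod (layer_vert n g) (layer_vert n g) (ends e)"
    using layer_ends_eq by simp
  have "inj_on (\<lambda>e. (e, g)) f" by (rule inj_onI) simp
  then show "forest (layer_ends p ends m n) (f \<times> {g}) \<longleftrightarrow> forest ends f"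
    unfolding lift by (rule forest_image_iff[where h="\<lambda>e. (e, g)", OF ends inj_layer_vert])
  show "(layer_vert n g x, layer_vert n g y) \<in> reach (layer_ends p ends m n) (f \<times> {g}) \<longleftrightarrow>
      (x, y) \<in> reach ends f"
    unfolding lift by (rule reach_image_iff[where h="\<lambda>e. (e, g)", OF ends inj_layer_vert])
qed

lemma piece_forests_eq:
  assumes S: "S \<in> segs" and g: "g < p ^ n"
  shows "layer.piece_forests (S, g) \<beta> = (\<lambda>f. f \<times> {g}) ` seg_forests S \<beta>"
proof -
  have lift_iff: "layer.piece_forest (S, g) (f \<times> {g}) \<and> layer.joins (S, g) (f \<times> {g}) = \<beta> \<longleftrightarrow>
      f \<in> seg_forests S \<beta>" if "f \<subseteq> S" for f
    using piece_lift_iff[OF that] inj_layer_vert[of n g] subsetD[OF that]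
    unfolding layer.piece_forest_def layer.joins_def piece_verts_eq[OF S g] seg_forests_def
      piece_edges_def piece_a_def piece_b_def
    by (auto simp: inj_eq)
  show ?thesis
  proof
    show "layer.piece_forests (S, g) \<beta> \<subseteq> (\<lambda>f. f \<times> {g}) ` seg_forests S \<beta>"
    proof
      fix F assume F: "F \<in> layer.piece_forests (S, g) \<beta>"
      then have "F \<subseteq> S \<times> {g}"
        unfolding layer.piece_forests_def layer.piece_forest_def piece_edges_def by auto
      then have "F = fst ` F \<times> {g}" "fst ` F \<subseteq> S" by force+
      then show "F \<in> (\<lambda>f. f \<times> {g}) ` seg_forests S \<beta>"
        using lift_iff[of "fst ` F"] F unfolding layer.piece_forests_def by auto
    qed
    show "(\<lambda>f. f \<times> {g}) ` seg_forests S \<beta> \<subseteq> layer.piece_forests (S, g) \<beta>"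
      using lift_iff unfolding layer.piece_forests_def seg_forests_def by auto
  qed
qed

lemma card_piece_forests:
  assumes "S \<in> segs" "g < p ^ n"
  shows "card (layer.piece_forests (S, g) \<beta>) = card (seg_forests S \<beta>)"
  unfolding piece_forests_eq[OF assms] by (rule card_image) (auto simp: inj_on_def)

lemma skeleton_edges_eq: "layer.skeleton_edges = segs2 E ends m \<times> {0..<p ^ n}"
proof -
  have "layer.skeleton_edges = {j \<in> layer_pieces n. piece_a n j \<noteq> piece_b n j}"
    by (rule layer.skeleton_edges_def)
  also have "\<dots> = segs2 E ends m \<times> {0..<p ^ n}"
  proof (intro set_eqI)
    fix j show "j \<in> {j \<in> layer_pieces n. piece_a n j \<noteq> piece_b n j} \<longleftrightarrow> j \<in> segs2 E ends m \<times> {0..<p ^ n}"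
    proof (cases j)
      case (Pair S g)
      have "S \<in> segs2 E ends m \<Longrightarrow> S \<in> segs" using segs_eq by blast
      then show ?thesis
        using seg_junctions(2)[of S] inj_layer_vert[of n g]
        unfolding Pair layer_pieces_def piece_a_def piece_b_def by (auto simp: inj_eq)
    qed
  qed
  finally show ?thesis .
qed

lemma kappa_layer_eq:
  "kappa_layer p V E ends m n = (\<Prod>S\<in>segs1 E ends m. card (seg_forests S False) ^ p ^ n) * skeleton_sum n"
proof -
  let ?\<Gamma> = "{0..<p ^ n}"
  let ?w = "\<lambda>\<tau> j. card (seg_forests (fst j) (j \<in> \<tau>))"
  have pieces: "layer_pieces n = segs1 E ends m \<times> ?\<Gamma> \<union> segs2 E ends m \<times> ?\<Gamma>"
    "(segs1 E ends m \<times> ?\<Gamma>) \<inter> (segs2 E ends m \<times> ?\<Gamma>) = {}"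
    "finite (segs1 E ends m \<times> ?\<Gamma>)" "finite (segs2 E ends m \<times> ?\<Gamma>)"
    using segs_eq finite_segs segs1_segs2_disjoint[OF decomposition]
    unfolding layer_pieces_def by auto
  have weight: "(\<Prod>j\<in>layer_pieces n. card (layer.piece_forests j (j \<in> \<tau>))) =
      (\<Prod>S\<in>segs1 E ends m. card (seg_forests S False) ^ p ^ n) * (\<Prod>j\<in>segs2 E ends m \<times> ?\<Gamma>. ?w \<tau> j)"
    if "\<tau> \<subseteq> segs2 E ends m \<times> ?\<Gamma>" for \<tau>
  proof -
    have "(\<Prod>j\<in>layer_pieces n. card (layer.piece_forests j (j \<in> \<tau>))) = (\<Prod>j\<in>layer_pieces n. ?w \<tau> j)"
      using card_piece_forests unfolding layer_pieces_def by (intro prod.cong) auto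
    also have "\<dots> = (\<Prod>j\<in>segs1 E ends m \<times> ?\<Gamma>. ?w \<tau> j) * (\<Prod>j\<in>segs2 E ends m \<times> ?\<Gamma>. ?w \<tau> j)"
      unfolding pieces(1) by (rule prod.union_disjoint[OF pieces(3,4,2)])
    also have "(\<Prod>j\<in>segs1 E ends m \<times> ?\<Gamma>. ?w \<tau> j) = (\<Prod>(S, g)\<in>segs1 E ends m \<times> ?\<Gamma>. card (seg_forests S False))"
    proof (rule prod.cong[OF refl])
      fix j assume "j \<in> segs1 E ends m \<times> ?\<Gamma>"
      then have "j \<notin> \<tau>" using that segs1_segs2_disjoint[OF decomposition] by blast
      then show "?w \<tau> j = (case j of (S, g) \<Rightarrow> card (seg_forests S False))" by (simp split: prod.splits)
    qed
    also have "\<dots> = (\<Prod>S\<in>segs1 E ends m. \<Prod>g\<in>?\<Gamma>. card (seg_forests S False))"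
      by (rule prod.cartesian_product[symmetric])
    finally show ?thesis by simp
  qed
  have "kappa_layer p V E ends m n =
      (\<Sum>\<tau> | spanning_tree (ram_layer_verts n) layer.skeleton_edges layer.skeleton_ends \<tau>.
        \<Prod>j\<in>layer_pieces n. card (layer.piece_forests j (j \<in> \<tau>)))"
    unfolding kappa_layer_def kappa_def by (rule layer.card_spanning_trees)
  also have "\<dots> = (\<Sum>\<tau> | spanning_tree (ram_layer_verts n) (segs2 E ends m \<times> ?\<Gamma>) (layer_skeleton_ends n) \<tau>.
      (\<Prod>S\<in>segs1 E ends m. card (seg_forests S False) ^ p ^ n) * (\<Prod>j\<in>segs2 E ends m \<times> ?\<Gamma>. ?w \<tau> j))"
    unfolding skeleton_edges_eq layer.skeleton_ends_def[abs_def] layer_skeleton_ends_def[abs_def]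
    using weight by (intro sum.cong) (auto simp: spanning_tree_def)
  finally show ?thesis unfolding skeleton_sum_def by (simp add: sum_distrib_left)
qed

end

context segment_tower
begin

lemma ramification_bounded:
  assumes stable: "\<forall>n\<ge>n0. card (ram_layer_verts n) = l" and x: "x \<in> V" "ramified m x"
  shows "m x \<le> enat n0"
proof (rule ccontr)
  assume "\<not> m x \<le> enat n0"
  then obtain k where k: "m x = enat k" "n0 < k" using x(2) unfolding ramified_def by (cases "m x") auto
  have "ram_layer_verts n0 \<subseteq> ram_layer_verts (Suc n0)"
  proof
    fix z assume "z \<in> ram_layer_verts n0"
    then obtain v a where v: "z = (v, a)" "v \<in> V" "ramified m v" "a < p ^ ram_exp m n0 v"
      unfolding ram_layer_verts_def layer_verts_def by auto
    moreover have "p ^ ram_exp m n0 v \<le> p ^ ram_exp m (Suc n0) v"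
      using p_pos ram_exp_mono[of n0 "Suc n0" m v] by (simp add: power_increasing)
    ultimately show "z \<in> ram_layer_verts (Suc n0)"
      unfolding ram_layer_verts_def layer_verts_def by simp
  qed
  moreover have "(x, p ^ n0) \<in> ram_layer_verts (Suc n0) - ram_layer_verts n0"
    using x k p_gt_1 unfolding ram_layer_verts_def layer_verts_def ram_exp_def by simp
  moreover have "finite (ram_layer_verts (Suc n0))"
    using finite_layer_verts unfolding ram_layer_verts_def by simp
  moreover note psubset_card_mono[OF calculation(3)]
  ultimately have "card (ram_layer_verts n0) < card (ram_layer_verts (Suc n0))" by blast
  then show False using stable by simp
qed

lemma ram_layer_verts_stable:
  assumes bound: "\<And>x. x \<in> V \<Longrightarrow> ramified m x \<Longrightarrow> m x \<le> enat n0" and "n0 \<le> n"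
  shows "ram_layer_verts n = ram_layer_verts n0"
proof -
  have "ram_exp m n x = ram_exp m n0 x" if "x \<in> V" "ramified m x" for x
    using ram_exp_stable[of m x, OF bound[OF that] assms(2)] .
  then show ?thesis unfolding ram_layer_verts_def layer_verts_def by auto
qed

lemma layer_vert_stable:
  assumes bound: "m x \<le> enat n0" and "n0 \<le> n"
  shows "layer_vert n g x = layer_vert n0 (g mod p ^ n0) x"
proof -
  have "ram_exp m n x = ram_exp m n0 x" using ram_exp_stable[of m x, OF assms] .
  moreover have "p ^ ram_exp m n0 x dvd p ^ n0" by (rule le_imp_power_dvd) (rule ram_exp_le)
  ultimately show ?thesis unfolding layer_vert_def by (simp add: mod_mod_cancel)
qed

lemma skeleton_sum_step:
  assumes bound: "\<And>x. x \<in> V \<Longrightarrow> ramified m x \<Longrightarrow> m x \<le> enat n0" and n: "n0 \<le> n"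
  shows "skeleton_sum n = p ^ ((n - n0) * (card (ram_layer_verts n0) - 1)) *
    (\<Prod>S\<in>segs2 E ends m. card (seg_forests S False) ^ (p ^ n - p ^ n0)) * skeleton_sum n0"
proof -
  let ?E1 = "segs2 E ends m \<times> {0..<p ^ n}" and ?E0 = "segs2 E ends m \<times> {0..<p ^ n0}"
  let ?\<pi> = "\<lambda>j. (fst j, snd j mod p ^ n0)" and ?c = "p ^ (n - n0)"
  let ?C = "\<lambda>j. card (seg_forests (fst j) True)" and ?F = "\<lambda>j. card (seg_forests (fst j) False)"
  have segs2_segs: "S \<in> segs2 E ends m \<Longrightarrow> S \<in> segs" for S using segs_eq by blast
  have finite_segs2: "finite (segs2 E ends m)" using finite_segs segs_eq by simp
  have pn: "p ^ n = p ^ n0 * ?c" using n by (simp flip: power_add)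
  interpret cover: uniform_cover ?E1 ?E0 ?\<pi> ?c
  proof
    show "finite ?E1" "finite ?E0" using finite_segs2 by simp_all
    show "?\<pi> ` ?E1 \<subseteq> ?E0" using p_pos by auto
    show "0 < ?c" using p_pos by simp
    fix j assume "j \<in> ?E0"
    then obtain S g where j: "j = (S, g)" "S \<in> segs2 E ends m" "g < p ^ n0" by auto
    have "{j' \<in> ?E1. ?\<pi> j' = j} = {S} \<times> {x \<in> {0..<p ^ n0 * ?c}. x mod p ^ n0 = g}"
      unfolding j(1) pn using j(2) by auto
    then show "card {j' \<in> ?E1. ?\<pi> j' = j} = ?c"
      using card_residue_class[of "p ^ n0" g ?c] p_pos j(3) by (simp add: card_cartesian_product)
  qed
  have finite_ram_layer_verts: "finite (ram_layer_verts n0)"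
    using finite_layer_verts unfolding ram_layer_verts_def by simp
  have junctions: "layer_skeleton_ends n0 j \<in> ram_layer_verts n0 \<times> ram_layer_verts n0" if "j \<in> ?E0" for j
    using that seg_junctions_in[OF segs2_segs] edge_verts_segment_subset[OF segs2_segs]
      layer_vert_in_ram_layer_verts
    unfolding layer_skeleton_ends_def piece_a_def piece_b_def by (auto simp: subset_iff)
  have lifted: "layer_skeleton_ends n j = layer_skeleton_ends n0 (?\<pi> j)" if "j \<in> ?E1" for j
    using that seg_junctions_in[OF segs2_segs] edge_verts_segment_subset[OF segs2_segs]
      layer_vert_stable[OF bound n]
    unfolding layer_skeleton_ends_def piece_a_def piece_b_def by (auto simp: subset_iff)
  have sum_n: "skeleton_sum n = (\<Sum>\<tau> | spanning_tree (ram_layer_verts n0) ?E1 (layer_skeleton_ends n) \<tau>.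
      \<Prod>j\<in>?E1. if j \<in> \<tau> then ?C (?\<pi> j) else ?F (?\<pi> j))"
    using ram_layer_verts_stable[OF bound n] unfolding skeleton_sum_def
    by (intro sum.cong prod.cong) auto
  have sum_n0: "skeleton_sum n0 = (\<Sum>\<tau> | spanning_tree (ram_layer_verts n0) ?E0 (layer_skeleton_ends n0) \<tau>.
      \<Prod>j\<in>?E0. if j \<in> \<tau> then ?C j else ?F j)"
    unfolding skeleton_sum_def by (intro sum.cong prod.cong) auto
  have factor: "(\<Prod>j\<in>?E0. ?F j ^ (?c - 1)) =
      (\<Prod>S\<in>segs2 E ends m. card (seg_forests S False) ^ (p ^ n - p ^ n0))"
  proof -
    have "(\<Prod>j\<in>?E0. ?F j ^ (?c - 1)) =
        (\<Prod>(S, g)\<in>?E0. card (seg_forests S False) ^ (?c - 1))"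
      by (rule prod.cong) auto
    also have "\<dots> = (\<Prod>S\<in>segs2 E ends m. \<Prod>g\<in>{0..<p ^ n0}. card (seg_forests S False) ^ (?c - 1))"
      by (rule prod.cartesian_product[symmetric])
    also have "\<dots> = (\<Prod>S\<in>segs2 E ends m. card (seg_forests S False) ^ ((?c - 1) * p ^ n0))"
      by (simp add: power_mult)
    moreover have "(?c - 1) * p ^ n0 = p ^ n - p ^ n0" unfolding pn by (simp add: algebra_simps)
    ultimately show ?thesis by simp
  qed
  show ?thesis
    using cover.weighted_spanning_tree_sum_lift[where ends = "layer_skeleton_ends n0"
      and ends' = "layer_skeleton_ends n", OF finite_ram_layer_verts ram_layer_verts_nonempty
      junctions lifted, of ?C ?F]
    unfolding sum_n sum_n0 factor by (simp add: power_mult)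
qed

lemma kappa_layer_step:
  assumes bound: "\<And>x. x \<in> V \<Longrightarrow> ramified m x \<Longrightarrow> m x \<le> enat n0" and n: "n0 \<le> n"
  shows "kappa_layer p V E ends m n = kappa_layer p V E ends m n0 *
    p ^ ((n - n0) * (card (ram_layer_verts n0) - 1)) *
    (\<Prod>S\<in>segs. F_count ends m (seg_t ends m S) S ^ (p ^ n - p ^ n0))"
proof -
  interpret layer_n: segment_tower_layer p V E ends m n ..
  interpret layer_n0: segment_tower_layer p V E ends m n0 ..
  let ?F = "\<lambda>S. card (seg_forests S False)" and ?P = "p ^ ((n - n0) * (card (ram_layer_verts n0) - 1))"
  define d where "d = p ^ n - p ^ n0"
  have "p ^ n0 \<le> p ^ n" using n p_pos by (simp add: power_increasing)
  then have pn: "p ^ n = p ^ n0 + d" unfolding d_def by simp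
  have "finite (segs1 E ends m)" "finite (segs2 E ends m)" using finite_segs segs_eq by auto
  then have segs_prod: "(\<Prod>S\<in>segs. ?F S ^ d) = (\<Prod>S\<in>segs1 E ends m. ?F S ^ d) * (\<Prod>S\<in>segs2 E ends m. ?F S ^ d)"
    using segs1_segs2_disjoint[OF decomposition] unfolding segs_eq by (rule prod.union_disjoint)
  have "kappa_layer p V E ends m n = (\<Prod>S\<in>segs1 E ends m. ?F S ^ (p ^ n0 + d)) *
      (?P * (\<Prod>S\<in>segs2 E ends m. ?F S ^ d) * skeleton_sum n0)"
    using skeleton_sum_step[OF bound n] unfolding layer_n.kappa_layer_eq d_def[symmetric] pn by simp
  also have "\<dots> = kappa_layer p V E ends m n0 * ?P * (\<Prod>S\<in>segs. ?F S ^ d)"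
    unfolding layer_n0.kappa_layer_eq segs_prod power_add prod.distrib by (simp add: ac_simps)
  also have "(\<Prod>S\<in>segs. ?F S ^ d) = (\<Prod>S\<in>segs. F_count ends m (seg_t ends m S) S ^ d)"
    using card_seg_forests_False by simp
  finally show ?thesis unfolding d_def .
qed

end

theorem theorem5p18:
  fixes V :: "'v set" and E :: "'e set" and ends :: "'e \<Rightarrow> 'v \<times> 'v"
    and m :: "'v \<Rightarrow> enat" and p n0 l :: nat
  assumes "prime p"
    and "is_graph V E ends"
    and "connected_graph V E ends"
    and "\<forall>v\<in>V. \<not> is_tail V E ends m v"
    and "\<exists>v\<in>V. totally_ramified m v"
    and "has_segment_decomposition V E ends m"
    and "\<forall>n\<ge>n0. card {x \<in> layer_verts p V m n. ramified m (fst x)} = l"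
  shows "\<forall>n\<ge>n0. kappa_layer p V E ends m n =
           kappa_layer p V E ends m n0 * p ^ ((n - n0) * (l - 1)) *
           (\<Prod>S\<in>segments E ends m. F_count ends m (seg_t ends m S) S ^ (p ^ n - p ^ n0))"
proof -
  interpret segment_tower p V E ends m
    using assms(2,5,6) prime_gt_1_nat[OF assms(1)] by unfold_locales
  have stable: "\<forall>n\<ge>n0. card (ram_layer_verts n) = l"
    using assms(7) unfolding ram_layer_verts_def .
  then have bound: "\<And>x. x \<in> V \<Longrightarrow> ramified m x \<Longrightarrow> m x \<le> enat n0"
    by (rule ramification_bounded)
  show ?thesis
  proof (intro allI impI)
    fix n assume n: "n0 \<le> n"
    have "card (ram_layer_verts n0) = l" using stable by blast
    then show "kappa_layer p V E ends m n = kappa_layer p V E ends m n0 * p ^ ((n - n0) * (l - 1)) *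
        (\<Prod>S\<in>segments E ends m. F_count ends m (seg_t ends m S) S ^ (p ^ n - p ^ n0))"
      using kappa_layer_step[OF bound n] by simp
  qed
qed

end
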